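(* Assume Assumption A holds and $\alpha\in W^{3,\infty}(0,T)$, and let $u$ be the solution of problem (P) (assumed regular enough that the quantities below are defined). Let $0\le\varepsilon\ll1$. Then there exists a constant $Q=Q(\varepsilon,\|\alpha\|_{W^{3,\infty}(0,T)},T)$ such that for $v=u$ or $v=\Delta u$, with $v_0:=v(\cdot,0)$, and for $0<t\le T$, $$\Big|\partial_t I^{(1-\varepsilon)}\partial_t\big(\zeta(k*\Delta v)\big)(\bm x,t)\Big|\le Q\int_0^t\frac{|\partial_s\Delta v(\bm x,s)|}{(t-s)^{\varepsilon}}\,ds+\frac{Q\,|\Delta v_0(\bm x)|}{t^{\varepsilon}}.$$
   Context: Setting: $\Omega\subset\mathbb R^d$ ($1\le d\le3$) bounded smooth domain, $T>0$, $\mu,\zeta>0$, $k(t)=t^{\alpha(t)-1}/\Gamma(\alpha(t))$, $(k*\varphi)(t)=\int_0^tk(t-s)\varphi(s)ds$. Problem (P): $\partial_t u-\mu\Delta u-\zeta(k*\Delta u)=f$ in $\Omega\times(0,T]$, $u(\cdot,0)=u_0$, $u=0$ on $\partial\Omega\times(0,T]$. For a constant $0<\beta\le1$, $I^{(\beta)}\varphi(t)=\frac{1}{\Gamma(\beta)}\int_0^t(t-s)^{\beta-1}\varphi(s)ds$ is the Riemann–Liouville fractional integral (with $I^{(1)}$ the ordinary integral). Assumption A: (i) $0<\alpha_*\le\alpha(t)\le1$ on $[0,T]$, $\alpha(0)=1$, $|\alpha'|,|\alpha''|\le Q$ on $[0,T]$; (ii) $f\in L^p(0,T;L^2(\Omega))$,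 $\Delta u_0\in L^2(\Omega)$. *)

theory Defs
  imports "HOL-Analysis.Analysis"
begin

definition vo_kernel :: "(real \<Rightarrow> real) \<Rightarrow> real \<Rightarrow> real" where
  "vo_kernel \<alpha> t = t powr (\<alpha> t - 1) / Gamma (\<alpha> t)"

definition kconv :: "(real \<Rightarrow> real) \<Rightarrow> (real \<Rightarrow> real) \<Rightarrow> real \<Rightarrow> real" where
  "kconv \<alpha> \<phi> t = integral {0..t} (\<lambda>s. vo_kernel \<alpha> (t - s) * \<phi> s)"

definition RL_int :: "real \<Rightarrow> (real \<Rightarrow> real) \<Rightarrow> real \<Rightarrow> real" where
  "RL_int \<beta> \<phi> t = (1 / Gamma \<beta>) * integral {0..t} (\<lambda>s. (t - s) powr (\<beta> - 1) * \<phi> s)"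

definition laplacian :: "(real^'n \<Rightarrow> real) \<Rightarrow> real^'n \<Rightarrow> real" where
  "laplacian g x = (\<Sum>i\<in>UNIV. deriv (deriv (\<lambda>b. g (x + b *\<^sub>R axis i 1))) 0)"

end

theory Submission
  imports Defs
begin

text \<open>Write \<open>w\<close> for \<open>\<Delta>v(x,\<cdot>)\<close> and \<open>\<phi> = w'\<close>. For \<open>s > 0\<close> the kernel \<open>k\<close> agrees with
  \<open>\<kappa>(s) = exp((\<alpha>(s) - 1) ln s) / \<Gamma>(\<alpha>(s))\<close>, which is continuous on \<open>[0,T]\<close> with \<open>\<kappa>(0) = 1\<close>
  because \<open>\<alpha>(0) = 1\<close>, and satisfies \<open>|\<kappa>(x) - \<kappa>(y)| \<le> C (x - y) y\<^sup>-\<^sup>1\<^sup>/\<^sup>2\<close>, since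
  \<open>\<alpha>(s) - 1 = O(s)\<close> tames the logarithm in \<open>\<kappa>'\<close>. Differentiating the convolution gives
  \<open>\<partial>\<^sub>t(k * w) = \<kappa> w(0) + \<kappa> * \<phi>\<close>, so the fractional integral of it is
  \<open>w(0) \<integral> \<sigma>\<^sup>-\<^sup>\<epsilon> \<kappa>(t - \<sigma>) + \<integral> \<sigma>\<^sup>-\<^sup>\<epsilon> (\<kappa> * \<phi>)(t - \<sigma>)\<close>. Left difference quotients of the first
  term are bounded by \<open>C t\<^sup>-\<^sup>\<epsilon>\<close>; for the second, the kernel increment contributes
  \<open>\<integral>\<integral> \<sigma>\<^sup>-\<^sup>\<epsilon> (y - \<sigma> - u)\<^sup>-\<^sup>1\<^sup>/\<^sup>2 |\<phi>(u)|\<close>, which after exchanging the order of integration is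
  \<open>C \<integral> (t - u)\<^sup>-\<^sup>\<epsilon> |\<phi>(u)| du\<close> as long as \<open>\<epsilon> + 1/2 < 1\<close>, while all other contributions vanish
  as \<open>h \<rightarrow> 0\<close>.\<close>

section \<open>Weakly singular integrals on an interval\<close>

lemma has_integral_reflect_Icc0:
  fixes f :: "real \<Rightarrow> real"
  shows "((\<lambda>s. f (r - s)) has_integral I) {0..r} \<longleftrightarrow> (f has_integral I) {0..r}"
proof -
  have "(f has_integral I) {0..r} \<longleftrightarrow> ((\<lambda>x. f (x + r)) has_integral I) {0-r..r-r}"
    by (rule has_integral_shift_real_ivl_iff)
  also have "\<dots> \<longleftrightarrow> ((\<lambda>x. f (-x + r)) has_integral I) {-(r-r)..-(0-r)}"
    by (rule has_integral_reflect_real[symmetric, where f="\<lambda>x. f (x + r)"])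
  finally show ?thesis by (simp add: algebra_simps)
qed

lemma integrable_reflect_Icc0:
  fixes f :: "real \<Rightarrow> real"
  shows "(\<lambda>s. f (r - s)) integrable_on {0..r} \<longleftrightarrow> f integrable_on {0..r}"
  using has_integral_reflect_Icc0 unfolding integrable_on_def by blast

lemma integral_reflect_Icc0:
  fixes f :: "real \<Rightarrow> real"
  shows "integral {0..r} (\<lambda>s. f (r - s)) = integral {0..r} f"
  by (metis has_integral_integral has_integral_reflect_Icc0 integral_unique
      integrable_reflect_Icc0 not_integrable_integral)

lemma has_integral_powr_neg:
  fixes p r :: real
  assumes "0 \<le> p" "p < 1" "0 \<le> r"
  shows "((\<lambda>s. s powr (-p)) has_integral r powr (1 - p) / (1 - p)) {0..r}"
  using has_integral_powr_from_0[of "-p" r] assms by simp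

lemma has_integral_reflect_powr_neg:
  fixes p r :: real
  assumes "0 \<le> p" "p < 1" "0 \<le> r"
  shows "((\<lambda>s. (r - s) powr (-p)) has_integral r powr (1 - p) / (1 - p)) {0..r}"
  using has_integral_powr_neg[OF assms] has_integral_reflect_Icc0[of "\<lambda>s. s powr (-p)"] by simp

lemma has_integral_powr_neg_both_ends:
  fixes p y :: real
  assumes "0 \<le> p" "p < 1" "0 \<le> y"
  shows "((\<lambda>\<sigma>. \<sigma> powr (-p) + (y - \<sigma>) powr (-p)) has_integral 2 * (y powr (1 - p) / (1 - p))) {0..y}"
  using has_integral_add[OF has_integral_powr_neg[OF assms] has_integral_reflect_powr_neg[OF assms]]
  by simp

lemma absolutely_integrable_powr_neg_mult:
  fixes g :: "real \<Rightarrow> real"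
  assumes g: "continuous_on {0..r} g" and p: "0 \<le> p" "p < 1" and r: "0 \<le> r"
  shows "(\<lambda>s. s powr (-p) * g s) absolutely_integrable_on {0..r}"
proof -
  obtain M where M: "\<And>s. s \<in> {0..r} \<Longrightarrow> norm (g s) \<le> M"
    using compact_imp_bounded[OF compact_continuous_image[OF g compact_Icc]]
    by (fastforce simp: bounded_iff)
  show ?thesis
  proof (rule measurable_bounded_by_integrable_imp_absolutely_integrable)
    have "(\<lambda>s. s powr (-p)) \<in> borel_measurable (lebesgue_on {0..r})"
      by (intro measurable_restrict_space1 measurable_completion) (simp add: measurable_lborel1)
    then show "(\<lambda>s. s powr (-p) * g s) \<in> borel_measurable (lebesgue_on {0..r})"
      using continuous_imp_measurable_on_sets_lebesgue[OF g] by (intro borel_measurable_times) auto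
    show "(\<lambda>s. M * s powr (-p)) integrable_on {0..r}"
      using has_integral_powr_neg[OF p r] by (intro integrable_on_mult_right) (auto simp: integrable_on_def)
    show "norm (s powr (-p) * g s) \<le> M * s powr (-p)" if "s \<in> {0..r}" for s
      using M[OF that] by (simp add: abs_mult mult.commute mult_right_mono)
  qed simp
qed

lemma integrable_powr_neg_mult:
  fixes g :: "real \<Rightarrow> real"
  assumes "continuous_on {0..r} g" "0 \<le> p" "p < 1" "0 \<le> r"
  shows "(\<lambda>s. s powr (-p) * g s) integrable_on {0..r}"
  using absolutely_integrable_powr_neg_mult[OF assms] by (rule set_lebesgue_integral_eq_integral(1))

lemma continuous_on_reflect:
  fixes g :: "real \<Rightarrow> real"
  assumes "continuous_on {0..T} g" "0 \<le> c - b" "c - a \<le> T"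
  shows "continuous_on {a..b} (\<lambda>\<sigma>. g (c - \<sigma>))"
  by (rule continuous_on_compose2[OF assms(1)]) (use assms in \<open>auto intro!: continuous_intros\<close>)

lemma integrable_reflect_powr_neg_mult:
  fixes g :: "real \<Rightarrow> real"
  assumes "continuous_on {0..r} g" "0 \<le> p" "p < 1" "0 \<le> r"
  shows "(\<lambda>s. (r - s) powr (-p) * g s) integrable_on {0..r}"
proof -
  have "(\<lambda>\<sigma>. \<sigma> powr (-p) * g (r - \<sigma>)) integrable_on {0..r}"
    using assms by (intro integrable_powr_neg_mult continuous_on_reflect[of r]) auto
  then show ?thesis
    using integrable_reflect_Icc0[where f="\<lambda>\<sigma>. \<sigma> powr (-p) * g (r - \<sigma>)" and r=r] by simp
qed

lemma integral_abs_le_const: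
  fixes f :: "real \<Rightarrow> real"
  assumes "0 \<le> B" "f integrable_on {a..b}" "\<And>x. x \<in> {a..b} \<Longrightarrow> \<bar>f x\<bar> \<le> B" "a \<le> b"
  shows "\<bar>integral {a..b} f\<bar> \<le> B * (b - a)"
  using has_integral_bound[of B f "integral {a..b} f" a b] assms by (auto simp: has_integral_integral)

lemma integral_abs_le_open_interval:
  fixes f g :: "real \<Rightarrow> real"
  assumes "f integrable_on {a..b}" "g integrable_on {a..b}" "\<And>x. a < x \<Longrightarrow> x < b \<Longrightarrow> \<bar>f x\<bar> \<le> g x"
  shows "\<bar>integral {a..b} f\<bar> \<le> integral {a..b} g"
proof -
  have "norm (integral {a<..<b} f) \<le> integral {a<..<b} g"
    using assms by (intro integral_norm_bound_integral) (auto simp: integrable_on_open_interval_real)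
  then show ?thesis by (simp add: integral_open_interval_real[symmetric])
qed

lemma abs_integral_le_nn_integral:
  fixes f :: "real \<Rightarrow> real"
  assumes "f absolutely_integrable_on {a..b}"
  shows "ennreal \<bar>integral {a..b} f\<bar> \<le> (\<integral>\<^sup>+x. ennreal (indicator {a..b} x * \<bar>f x\<bar>) \<partial>lborel)"
proof -
  have i: "f integrable_on {a..b}" "(\<lambda>x. \<bar>f x\<bar>) integrable_on {a..b}"
    using assms by (auto simp: absolutely_integrable_on_def)
  have "\<bar>integral {a..b} f\<bar> \<le> integral {a..b} (\<lambda>x. \<bar>f x\<bar>)"
    using integral_norm_bound_integral[OF i] by simp
  moreover have "(\<integral>\<^sup>+x. ennreal (indicator {a..b} x * \<bar>f x\<bar>) \<partial>lborel) = ennreal (integral {a..b} (\<lambda>x. \<bar>f x\<bar>))"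
    by (rule nn_integral_has_integral_lebesgue) (use i in auto)
  ultimately show ?thesis by (simp add: ennreal_leI)
qed

lemma powr_neg_product_le_sum:
  fixes \<sigma> y \<epsilon> :: real
  assumes s: "0 < \<sigma>" "\<sigma> < y" and e: "0 \<le> \<epsilon>"
  shows "\<sigma> powr (-\<epsilon>) * (y - \<sigma>) powr (-1/2) \<le> \<sigma> powr (-(\<epsilon>+1/2)) + (y - \<sigma>) powr (-(\<epsilon>+1/2))"
proof (cases "\<sigma> \<le> y - \<sigma>")
  case True
  have "(y - \<sigma>) powr (-1/2) \<le> \<sigma> powr (-1/2)" using True s by (intro powr_mono2') auto
  then have "\<sigma> powr (-\<epsilon>) * (y - \<sigma>) powr (-1/2) \<le> \<sigma> powr (-\<epsilon>) * \<sigma> powr (-1/2)"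
    by (intro mult_left_mono) auto
  also have "\<dots> = \<sigma> powr (-(\<epsilon>+1/2))" using s by (simp add: powr_add[symmetric])
  finally show ?thesis using s by (smt (verit) powr_ge_zero)
next
  case False
  have "\<sigma> powr (-\<epsilon>) \<le> (y - \<sigma>) powr (-\<epsilon>)" using False s e by (intro powr_mono2') auto
  then have "\<sigma> powr (-\<epsilon>) * (y - \<sigma>) powr (-1/2) \<le> (y - \<sigma>) powr (-\<epsilon>) * (y - \<sigma>) powr (-1/2)"
    by (intro mult_right_mono) auto
  also have "\<dots> = (y - \<sigma>) powr (-(\<epsilon>+1/2))" using s by (simp add: powr_add[symmetric])
  finally show ?thesis using s by (smt (verit) powr_ge_zero)
qed

lemma nn_integral_powr_neg_product_le:
  fixes \<epsilon> L :: real
  assumes e: "0 \<le> \<epsilon>" "\<epsilon> < 1/2" and L: "0 \<le> L"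
  shows "(\<integral>\<^sup>+\<sigma>. ennreal (indicator {0..L} \<sigma> * (\<sigma> powr (-\<epsilon>) * (L - \<sigma>) powr (-1/2))) \<partial>lborel)
     \<le> ennreal (2 * (L powr (1 - (\<epsilon>+1/2)) / (1 - (\<epsilon>+1/2))))"
proof -
  define p where "p = \<epsilon> + 1/2"
  have p: "0 \<le> p" "p < 1" using e by (auto simp: p_def)
  have "(\<integral>\<^sup>+\<sigma>. ennreal (indicator {0..L} \<sigma> * (\<sigma> powr (-\<epsilon>) * (L - \<sigma>) powr (-1/2))) \<partial>lborel)
      \<le> (\<integral>\<^sup>+\<sigma>. ennreal (indicator {0..L} \<sigma> * (\<sigma> powr (-p) + (L - \<sigma>) powr (-p))) \<partial>lborel)"
  proof (rule nn_integral_mono)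
    fix \<sigma> :: real
    show "ennreal (indicator {0..L} \<sigma> * (\<sigma> powr (-\<epsilon>) * (L - \<sigma>) powr (-1/2)))
       \<le> ennreal (indicator {0..L} \<sigma> * (\<sigma> powr (-p) + (L - \<sigma>) powr (-p)))"
    proof (cases "0 < \<sigma> \<and> \<sigma> < L")
      case True
      then show ?thesis
        using powr_neg_product_le_sum[of \<sigma> L \<epsilon>] e by (intro ennreal_leI) (auto simp: p_def)
    next
      case False
      then have "indicator {0..L} \<sigma> * (\<sigma> powr (-\<epsilon>) * (L - \<sigma>) powr (-1/2)) = (0::real)"
        by (cases "\<sigma> = 0"; cases "\<sigma> = L") (auto simp: indicator_def)
      then show ?thesis by (metis ennreal_0 zero_le)
    qed
  qed
  also have "\<dots> = ennreal (2 * (L powr (1 - p) / (1 - p)))"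
    by (rule nn_integral_has_integral_lebesgue) (use has_integral_powr_neg_both_ends[OF p L] in auto)
  finally show ?thesis by (simp add: p_def)
qed

lemma abs_ln_le_powr_neg_half:
  fixes s T :: real
  assumes s: "0 < s" "s \<le> T"
  shows "\<bar>ln s\<bar> \<le> 2 * (1 + T) * s powr (-1/2)"
proof -
  have p: "0 < s powr (-1/2)" "0 < s powr (1/2)" using s by auto
  have "ln (s powr (-1/2)) < s powr (-1/2)" using p by (intro ln_less_self) auto
  then have a: "- ln s < 2 * s powr (-1/2)" using s by (simp add: ln_powr)
  have "s powr (1/2) = s powr (1 + (-1/2))" by simp
  also have "\<dots> = s powr 1 * s powr (-1/2)" by (rule powr_add)
  also have "\<dots> = s * s powr (-1/2)" using s by simp
  finally have sq: "s powr (1/2) = s * s powr (-1/2)" .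
  have "ln (s powr (1/2)) < s powr (1/2)" using p by (intro ln_less_self) auto
  then have "ln s / 2 < s powr (1/2)" using s by (simp add: ln_powr)
  moreover have "s * s powr (-1/2) \<le> T * s powr (-1/2)" using s p by (intro mult_right_mono) auto
  ultimately have b: "ln s < 2 * T * s powr (-1/2)" unfolding sq by linarith
  have "2 * s powr (-1/2) \<le> 2 * (1 + T) * s powr (-1/2)" "2 * T * s powr (-1/2) \<le> 2 * (1 + T) * s powr (-1/2)"
    using p s by (intro mult_right_mono; simp)+
  then show ?thesis unfolding abs_le_iff using a b by linarith
qed

lemma has_real_derivative_left_quotient:
  fixes f :: "real \<Rightarrow> real"
  assumes der: "(f has_real_derivative D) (at t within {0..T})" and t: "0 < t" "t \<le> T"
  shows "((\<lambda>h. (f t - f (t - h)) / h) \<longlongrightarrow> D) (at_right 0)"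
proof -
  have 1: "((\<lambda>y. (f y - f t) / (y - t)) \<longlongrightarrow> D) (at t within {0..T})"
    using der by (simp add: has_field_derivative_iff)
  have 2: "filterlim (\<lambda>h. t - h) (at t within {0..T}) (at_right 0)"
  proof (rule filterlim_at_withinI)
    show "((\<lambda>h. t - h) \<longlongrightarrow> t) (at_right 0)"
      by (rule tendsto_eq_intros | simp)+
    have "eventually (\<lambda>h. 0 < h \<and> h < t) (at_right (0::real))"
      using t(1) by (auto simp: eventually_at_right[OF t(1)])
    then show "eventually (\<lambda>h. t - h \<in> {0..T} - {t}) (at_right 0)"
      by eventually_elim (use t in auto)
  qed
  have "((\<lambda>h. (f (t - h) - f t) / ((t - h) - t)) \<longlongrightarrow> D) (at_right 0)"
    using filterlim_compose[OF 1 2] by (simp add: o_def)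
  then show ?thesis
    by (rule Lim_transform_eventually)
       (auto simp: divide_simps intro!: eventually_mono[OF eventually_at_right_less])
qed

lemma tendsto_by_eventually_le:
  fixes f :: "real \<Rightarrow> real"
  assumes "\<And>e. 0 < e \<Longrightarrow> eventually (\<lambda>h. \<bar>f h - V\<bar> \<le> e) F"
  shows "(f \<longlongrightarrow> V) F"
proof (rule tendstoI)
  fix e :: real assume "0 < e"
  then have "eventually (\<lambda>h. \<bar>f h - V\<bar> \<le> e/2) F" using assms[of "e/2"] by simp
  then show "eventually (\<lambda>h. dist (f h) V < e) F"
    by eventually_elim (use \<open>0 < e\<close> in \<open>auto simp: dist_real_def\<close>)
qed

lemma abs_le_of_tendsto_eventually_le:
  fixes f :: "real \<Rightarrow> real"
  assumes lim: "(f \<longlongrightarrow> D) (at_right 0)" and M: "0 \<le> M"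
    and bound: "\<And>e. 0 < e \<Longrightarrow> eventually (\<lambda>h. \<bar>f h\<bar> \<le> B + e * M) (at_right 0)"
  shows "\<bar>D\<bar> \<le> B"
proof (rule field_le_epsilon)
  fix e :: real assume e: "0 < e"
  have "eventually (\<lambda>h. \<bar>f h\<bar> \<le> B + e / (M + 1) * M) (at_right 0)"
    by (rule bound) (use e M in simp)
  then have "\<bar>D\<bar> \<le> B + e / (M + 1) * M"
    using Lim_norm_ubound[OF trivial_limit_at_right_real lim] by simp
  also have "\<dots> \<le> B + e" using e M by (simp add: field_simps)
  finally show "\<bar>D\<bar> \<le> B + e" .
qed

lemma bounded_on_Icc:
  fixes g :: "real \<Rightarrow> real"
  assumes "continuous_on {a..b} g" "a \<le> b"
  obtains M where "0 \<le> M" "\<And>s. s \<in> {a..b} \<Longrightarrow> \<bar>g s\<bar> \<le> M"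
proof -
  obtain M where M: "\<And>s. s \<in> {a..b} \<Longrightarrow> norm (g s) \<le> M"
    using compact_imp_bounded[OF compact_continuous_image[OF assms(1) compact_Icc]]
    by (fastforce simp: bounded_iff)
  show ?thesis using M M[of a] assms(2) by (intro that[of M]) force+
qed

section \<open>The variable-order kernel\<close>

text \<open>At \<open>s = 0\<close>, where \<open>vo_kernel\<close> vanishes
  because \<open>0 powr _ = 0\<close>, it equals \<open>rGamma (\<alpha> 0)\<close> (as \<open>ln 0 = 0\<close>), i.e. 1 when \<open>\<alpha> 0 = 1\<close>:
  this is the continuous extension.\<close>

definition vo_kernel_ext :: "(real \<Rightarrow> real) \<Rightarrow> real \<Rightarrow> real" where
  "vo_kernel_ext \<alpha> s = exp ((\<alpha> s - 1) * ln s) * rGamma (\<alpha> s)"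

lemma vo_kernel_eq_ext: "0 < s \<Longrightarrow> vo_kernel \<alpha> s = vo_kernel_ext \<alpha> s"
  by (simp add: vo_kernel_def vo_kernel_ext_def powr_def rGamma_inverse_Gamma divide_inverse)

locale variable_order =
  fixes T \<alpha>s :: real and \<alpha> \<alpha>' :: "real \<Rightarrow> real"
  assumes T_pos: "0 < T" and lower_pos: "0 < \<alpha>s"
    and order_bounds: "\<And>s. s \<in> {0..T} \<Longrightarrow> \<alpha>s \<le> \<alpha> s \<and> \<alpha> s \<le> 1"
    and order_at_0: "\<alpha> 0 = 1"
    and order_deriv: "\<And>s. s \<in> {0..T} \<Longrightarrow> (\<alpha> has_real_derivative \<alpha>' s) (at s within {0..T})"
    and order_deriv_cont: "continuous_on {0..T} \<alpha>'"
begin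

definition kernel_power :: "real \<Rightarrow> real" where
  "kernel_power s = exp ((\<alpha> s - 1) * ln s)"

definition kernel_deriv :: "real \<Rightarrow> real" where
  "kernel_deriv s = kernel_power s * (\<alpha>' s * ln s + (\<alpha> s - 1) / s) * rGamma (\<alpha> s)
     - kernel_power s * rGamma (\<alpha> s) * Digamma (\<alpha> s) * \<alpha>' s"

lemma vo_kernel_ext_eq: "vo_kernel_ext \<alpha> s = kernel_power s * rGamma (\<alpha> s)"
  by (simp add: vo_kernel_ext_def kernel_power_def)

lemma order_cont: "continuous_on {0..T} \<alpha>"
  using order_deriv by (meson DERIV_continuous continuous_on_eq_continuous_within)

lemma order_deriv_bounded:
  obtains Ma where "0 \<le> Ma" "\<And>s. s \<in> {0..T} \<Longrightarrow> \<bar>\<alpha>' s\<bar> \<le> Ma"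
    "\<And>s. s \<in> {0..T} \<Longrightarrow> \<bar>\<alpha> s - 1\<bar> \<le> Ma * s"
proof -
  obtain Ma where Ma: "0 \<le> Ma" "\<And>s. s \<in> {0..T} \<Longrightarrow> \<bar>\<alpha>' s\<bar> \<le> Ma"
    using bounded_on_Icc[OF order_deriv_cont] T_pos by (metis less_eq_real_def)
  have "\<bar>\<alpha> s - 1\<bar> \<le> Ma * s" if s: "s \<in> {0..T}" for s
  proof -
    have "norm (\<alpha> s - \<alpha> 0) \<le> Ma * norm (s - 0)"
    proof (rule field_differentiable_bound[where S="{0..s}" and f'=\<alpha>'])
      fix z assume z: "z \<in> {0..s}"
      show "(\<alpha> has_field_derivative \<alpha>' z) (at z within {0..s})"
        using DERIV_subset[OF order_deriv[of z]] z s by auto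
      show "norm (\<alpha>' z) \<le> Ma" using Ma(2)[of z] z s by auto
    qed (use s in auto)
    then show ?thesis using s order_at_0 by simp
  qed
  with Ma show ?thesis using that by blast
qed

text \<open>Since \<open>\<alpha> s - 1 = O(s)\<close> beats the logarithm, the exponent of \<open>kernel_power\<close> tends to 0 at
  the origin, where \<open>kernel_power 0 = 1\<close> because \<open>ln 0 = 0\<close>.\<close>

lemma kernel_power_continuous_on: "continuous_on {0..T} kernel_power"
  unfolding continuous_on_eq_continuous_within
proof
  fix x assume x: "x \<in> {0..T}"
  show "continuous (at x within {0..T}) kernel_power"
  proof (cases "x = 0")
    case False
    then have "continuous (at x within {0..T}) \<alpha>" "0 < x"
      using order_cont x by (auto simp: continuous_on_eq_continuous_within)
    then show ?thesis unfolding kernel_power_def by (intro continuous_intros) auto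
  next
    case True
    obtain Ma where Ma: "\<And>s. s \<in> {0..T} \<Longrightarrow> \<bar>\<alpha> s - 1\<bar> \<le> Ma * s"
      using order_deriv_bounded by blast
    have "((\<lambda>s. (\<alpha> s - 1) * ln s) \<longlongrightarrow> 0) (at_right 0)"
    proof (rule Lim_null_comparison)
      show "eventually (\<lambda>s. norm ((\<alpha> s - 1) * ln s) \<le> Ma * (2 * (1 + T)) * sqrt s) (at_right 0)"
        unfolding eventually_at_right[OF T_pos]
      proof (intro exI[of _ T] conjI allI impI)
        fix s :: real assume s: "0 < s" "s < T"
        have "norm ((\<alpha> s - 1) * ln s) \<le> (Ma * s) * (2 * (1 + T) * s powr (-1/2))"
          unfolding real_norm_def abs_mult
          using Ma[of s] abs_ln_le_powr_neg_half[of s T] s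
          by (intro mult_mono) auto
        also have "s * s powr (-1/2) = sqrt s"
          using s by (simp add: powr_minus_divide powr_half_sqrt real_div_sqrt)
        then have "(Ma * s) * (2 * (1 + T) * s powr (-1/2)) = Ma * (2 * (1 + T)) * sqrt s"
          by (metis mult.assoc mult.left_commute)
        finally show "norm ((\<alpha> s - 1) * ln s) \<le> Ma * (2 * (1 + T)) * sqrt s" .
      qed (use T_pos in auto)
      show "((\<lambda>s. Ma * (2 * (1 + T)) * sqrt s) \<longlongrightarrow> 0) (at_right 0)"
        by (rule tendsto_eq_intros refl | simp)+
    qed
    then have "(kernel_power \<longlongrightarrow> exp 0) (at_right 0)"
      unfolding kernel_power_def by (intro tendsto_intros)
    then show ?thesis using True T_pos
      by (simp add: continuous_within at_within_Icc_at_right kernel_power_def)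
  qed
qed

lemma rGamma_order_continuous_on: "continuous_on {0..T} (\<lambda>s. rGamma (\<alpha> s))"
  by (rule continuous_on_compose2[OF continuous_on_rGamma[of UNIV] order_cont]) auto

lemma vo_kernel_ext_continuous_on: "continuous_on {0..T} (vo_kernel_ext \<alpha>)"
  unfolding vo_kernel_ext_eq[abs_def]
  by (intro continuous_intros kernel_power_continuous_on rGamma_order_continuous_on)

lemma vo_kernel_ext_has_derivative:
  assumes x: "0 < x" "x \<le> T"
  shows "(vo_kernel_ext \<alpha> has_real_derivative kernel_deriv x) (at x within {0..T})"
proof -
  have "\<alpha> x \<notin> \<int>\<^sub>\<le>\<^sub>0"
    using order_bounds[of x] lower_pos x nonpos_Ints_nonpos by force
  then have dr: "((\<lambda>s. rGamma (\<alpha> s)) has_real_derivative (- rGamma (\<alpha> x) * Digamma (\<alpha> x)) * \<alpha>' x)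
      (at x within {0..T})"
    by (intro DERIV_chain2[where g=\<alpha>, OF has_field_derivative_rGamma_no_nonpos_int])
       (use order_deriv x in auto)
  have "((\<lambda>s. (\<alpha> s - 1) * ln s) has_real_derivative (\<alpha>' x * ln x + (\<alpha> x - 1) / x)) (at x within {0..T})"
    using order_deriv[of x] x by (auto intro!: derivative_eq_intros simp: field_simps)
  then have "(kernel_power has_real_derivative kernel_power x * (\<alpha>' x * ln x + (\<alpha> x - 1) / x))
      (at x within {0..T})"
    unfolding kernel_power_def[abs_def] by (rule DERIV_chain2[OF DERIV_exp])
  from DERIV_mult[OF this dr] show ?thesis
    unfolding vo_kernel_ext_eq[abs_def] kernel_deriv_def by (simp add: algebra_simps)
qed

lemma Digamma_order_bounded:
  obtains Dg where "0 \<le> Dg" "\<And>s. s \<in> {0..T} \<Longrightarrow> \<bar>Digamma (\<alpha> s)\<bar> \<le> Dg"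
proof
  fix s assume s: "s \<in> {0..T}"
  have "Digamma \<alpha>s \<le> Digamma (\<alpha> s)" "Digamma (\<alpha> s) \<le> Digamma (1::real)"
    using order_bounds[OF s] lower_pos by (intro Digamma_real_mono; force)+
  then show "\<bar>Digamma (\<alpha> s)\<bar> \<le> \<bar>Digamma \<alpha>s\<bar> + \<bar>Digamma (1::real)\<bar>" by linarith
qed simp

text \<open>The logarithm and \<open>(\<alpha> s - 1) / s\<close> in the derivative of the kernel are both \<open>O(s^{-1/2})\<close>.\<close>

lemma kernel_deriv_bound:
  obtains C where "0 \<le> C" "\<And>s. 0 < s \<Longrightarrow> s \<le> T \<Longrightarrow> \<bar>kernel_deriv s\<bar> \<le> C * s powr (-1/2)"
proof -
  obtain Ma where Ma: "0 \<le> Ma" "\<And>s. s \<in> {0..T} \<Longrightarrow> \<bar>\<alpha>' s\<bar> \<le> Ma"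
    "\<And>s. s \<in> {0..T} \<Longrightarrow> \<bar>\<alpha> s - 1\<bar> \<le> Ma * s"
    using order_deriv_bounded by blast
  obtain Eb where Eb: "0 \<le> Eb" "\<And>s. s \<in> {0..T} \<Longrightarrow> \<bar>kernel_power s\<bar> \<le> Eb"
    using bounded_on_Icc[OF kernel_power_continuous_on] T_pos by (metis less_eq_real_def)
  obtain Rg where Rg: "0 \<le> Rg" "\<And>s. s \<in> {0..T} \<Longrightarrow> \<bar>rGamma (\<alpha> s)\<bar> \<le> Rg"
    using bounded_on_Icc[OF rGamma_order_continuous_on] T_pos by (metis less_eq_real_def)
  obtain Dg where Dg: "0 \<le> Dg" "\<And>s. s \<in> {0..T} \<Longrightarrow> \<bar>Digamma (\<alpha> s)\<bar> \<le> Dg"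
    using Digamma_order_bounded by blast
  show ?thesis
  proof (rule that[of "Eb * Rg * Ma * (2 * (1 + T) + sqrt T + Dg * sqrt T)"])
    show "0 \<le> Eb * Rg * Ma * (2 * (1 + T) + sqrt T + Dg * sqrt T)"
      using Eb Rg Ma Dg T_pos by simp
    fix s assume s: "0 < s" "s \<le> T"
    then have sT: "s \<in> {0..T}" by simp
    have one: "1 \<le> sqrt T * s powr (-1/2)"
    proof -
      have "sqrt s * s powr (-1/2) = 1" using s by (simp add: powr_minus_divide powr_half_sqrt)
      moreover have "sqrt s * s powr (-1/2) \<le> sqrt T * s powr (-1/2)" using s by (intro mult_right_mono) auto
      ultimately show ?thesis by simp
    qed
    have ba: "\<bar>\<alpha>' s * ln s\<bar> \<le> Ma * (2 * (1 + T) * s powr (-1/2))"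
      unfolding abs_mult using Ma(2)[OF sT] abs_ln_le_powr_neg_half[OF s] Ma(1) by (intro mult_mono) auto
    have "\<bar>(\<alpha> s - 1) / s\<bar> \<le> Ma" using Ma(3)[OF sT] s by (simp add: abs_divide field_simps)
    also have "\<dots> \<le> Ma * (sqrt T * s powr (-1/2))" using mult_left_mono[OF one Ma(1)] by simp
    finally have bb: "\<bar>(\<alpha> s - 1) / s\<bar> \<le> Ma * (sqrt T * s powr (-1/2))" .
    have "\<bar>\<alpha>' s * ln s + (\<alpha> s - 1) / s\<bar> \<le> Ma * (2 * (1 + T) * s powr (-1/2)) + Ma * (sqrt T * s powr (-1/2))"
      using abs_triangle_ineq[of "\<alpha>' s * ln s" "(\<alpha> s - 1) / s"] ba bb by linarith
    also have "\<dots> = Ma * (2 * (1 + T) + sqrt T) * s powr (-1/2)"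
      by (simp add: algebra_simps)
    finally have b1: "\<bar>\<alpha>' s * ln s + (\<alpha> s - 1) / s\<bar> \<le> Ma * (2 * (1 + T) + sqrt T) * s powr (-1/2)" .
    have b2: "\<bar>Digamma (\<alpha> s) * \<alpha>' s\<bar> \<le> Dg * Ma * (sqrt T * s powr (-1/2))"
      using mult_left_mono[OF one, of "Dg * Ma"] Dg Ma mult_mono[OF Dg(2)[OF sT] Ma(2)[OF sT]]
      by (simp add: abs_mult)
    have "\<bar>kernel_deriv s\<bar> \<le> \<bar>kernel_power s\<bar> * \<bar>rGamma (\<alpha> s)\<bar>
        * (\<bar>\<alpha>' s * ln s + (\<alpha> s - 1) / s\<bar> + \<bar>Digamma (\<alpha> s) * \<alpha>' s\<bar>)"
    proof -
      have "kernel_deriv s = kernel_power s * rGamma (\<alpha> s)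
          * ((\<alpha>' s * ln s + (\<alpha> s - 1) / s) - Digamma (\<alpha> s) * \<alpha>' s)"
        by (simp add: kernel_deriv_def algebra_simps)
      then have "\<bar>kernel_deriv s\<bar> = \<bar>kernel_power s\<bar> * \<bar>rGamma (\<alpha> s)\<bar>
          * \<bar>(\<alpha>' s * ln s + (\<alpha> s - 1) / s) - Digamma (\<alpha> s) * \<alpha>' s\<bar>"
        by (simp only: abs_mult)
      also have "\<dots> \<le> \<bar>kernel_power s\<bar> * \<bar>rGamma (\<alpha> s)\<bar>
          * (\<bar>\<alpha>' s * ln s + (\<alpha> s - 1) / s\<bar> + \<bar>Digamma (\<alpha> s) * \<alpha>' s\<bar>)"
        by (intro mult_left_mono abs_triangle_ineq4) simp
      finally show ?thesis .
    qed
    also have "\<dots> \<le> Eb * Rg * (Ma * (2 * (1 + T) + sqrt T) * s powr (-1/2) + Dg * Ma * (sqrt T * s powr (-1/2)))"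
      using Eb(1) Rg(1) Eb(2)[OF sT] Rg(2)[OF sT] b1 b2 by (intro mult_mono add_mono) auto
    also have "\<dots> = Eb * Rg * Ma * (2 * (1 + T) + sqrt T + Dg * sqrt T) * s powr (-1/2)"
      by (simp add: algebra_simps)
    finally show "\<bar>kernel_deriv s\<bar> \<le> Eb * Rg * Ma * (2 * (1 + T) + sqrt T + Dg * sqrt T) * s powr (-1/2)" .
  qed
qed

lemma vo_kernel_ext_increment_le:
  obtains C where "0 \<le> C"
    "\<And>x y. 0 < y \<Longrightarrow> y \<le> x \<Longrightarrow> x \<le> T \<Longrightarrow>
       \<bar>vo_kernel_ext \<alpha> x - vo_kernel_ext \<alpha> y\<bar> \<le> C * (x - y) * y powr (-1/2)"
proof -
  obtain C where C: "0 \<le> C" "\<And>s. 0 < s \<Longrightarrow> s \<le> T \<Longrightarrow> \<bar>kernel_deriv s\<bar> \<le> C * s powr (-1/2)"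
    using kernel_deriv_bound by blast
  have "\<bar>vo_kernel_ext \<alpha> x - vo_kernel_ext \<alpha> y\<bar> \<le> C * (x - y) * y powr (-1/2)"
    if xy: "0 < y" "y \<le> x" "x \<le> T" for x y
  proof -
    have "norm (vo_kernel_ext \<alpha> x - vo_kernel_ext \<alpha> y) \<le> (C * y powr (-1/2)) * norm (x - y)"
    proof (rule field_differentiable_bound[where S="{y..x}" and f'=kernel_deriv])
      fix z assume z: "z \<in> {y..x}"
      show "(vo_kernel_ext \<alpha> has_field_derivative kernel_deriv z) (at z within {y..x})"
        using DERIV_subset[OF vo_kernel_ext_has_derivative[of z]] z xy by auto
      have "\<bar>kernel_deriv z\<bar> \<le> C * z powr (-1/2)" using C(2)[of z] z xy by auto
      also have "\<dots> \<le> C * y powr (-1/2)" using z xy C(1) by (intro mult_left_mono powr_mono2') auto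
      finally show "norm (kernel_deriv z) \<le> C * y powr (-1/2)" by simp
    qed (use xy in auto)
    then show ?thesis using xy by (simp add: mult_ac)
  qed
  with C(1) show ?thesis using that by blast
qed

end

section \<open>Convolution with the derivative of the data\<close>

locale kernel_conv =
  fixes T Mk Ck :: real and \<kappa> w \<phi> :: "real \<Rightarrow> real"
  assumes T_pos: "0 < T"
    and kernel_cont: "continuous_on {0..T} \<kappa>"
    and kernel_bound: "\<And>s. s \<in> {0..T} \<Longrightarrow> \<bar>\<kappa> s\<bar> \<le> Mk"
    and kernel_increment:
      "\<And>x y. 0 < y \<Longrightarrow> y \<le> x \<Longrightarrow> x \<le> T \<Longrightarrow> \<bar>\<kappa> x - \<kappa> y\<bar> \<le> Ck * (x - y) * y powr (-1/2)"
    and Ck_nonneg: "0 \<le> Ck"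
    and deriv_cont: "continuous_on {0..T} \<phi>"
    and has_deriv: "\<And>s. s \<in> {0..T} \<Longrightarrow> (w has_real_derivative \<phi> s) (at s within {0..T})"
begin

definition conv_deriv :: "real \<Rightarrow> real" where
  "conv_deriv x = integral {0..x} (\<lambda>u. \<kappa> (x - u) * \<phi> u)"

lemma Mk_nonneg: "0 \<le> Mk"
  using kernel_bound[of 0] T_pos by auto

lemma deriv_bounded:
  obtains Mp where "0 \<le> Mp" "\<And>s. s \<in> {0..T} \<Longrightarrow> \<bar>\<phi> s\<bar> \<le> Mp"
  using bounded_on_Icc[OF deriv_cont] T_pos by (metis less_eq_real_def)

lemma w_cont: "continuous_on {0..T} w"
  using has_deriv by (meson DERIV_continuous continuous_on_eq_continuous_within)

lemma w_increment_approx: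
  assumes "e > 0"
  obtains \<delta> where "\<delta> > 0"
    "\<And>x h. 0 < h \<Longrightarrow> h < \<delta> \<Longrightarrow> h \<le> x \<Longrightarrow> x \<le> T \<Longrightarrow> \<bar>w x - w (x - h) - h * \<phi> x\<bar> \<le> e * h"
proof -
  have "uniformly_continuous_on {0..T} \<phi>"
    by (rule compact_uniformly_continuous[OF deriv_cont compact_Icc])
  then obtain d where d: "d > 0"
    "\<And>x y. x \<in> {0..T} \<Longrightarrow> y \<in> {0..T} \<Longrightarrow> dist y x < d \<Longrightarrow> dist (\<phi> y) (\<phi> x) < e"
    unfolding uniformly_continuous_on_def using assms by metis
  have "\<bar>w x - w (x - h) - h * \<phi> x\<bar> \<le> e * h" if h: "0 < h" "h < d" "h \<le> x" "x \<le> T" for x h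
  proof -
    have "norm ((\<lambda>y. w y - \<phi> x * y) x - (\<lambda>y. w y - \<phi> x * y) (x - h)) \<le> e * norm (x - (x - h))"
    proof (rule field_differentiable_bound[where S="{x-h..x}" and f'="\<lambda>y. \<phi> y - \<phi> x"])
      fix z assume z: "z \<in> {x-h..x}"
      have "(w has_real_derivative \<phi> z) (at z within {x-h..x})"
        using DERIV_subset[OF has_deriv[of z]] z h by auto
      then show "((\<lambda>y. w y - \<phi> x * y) has_field_derivative \<phi> z - \<phi> x) (at z within {x-h..x})"
        by (auto intro!: derivative_eq_intros)
      show "norm (\<phi> z - \<phi> x) \<le> e"
        using d(2)[of x z] z h by (auto simp: dist_real_def)
    qed (use h in auto)
    then show ?thesis using h by (simp add: algebra_simps)
  qed
  with d(1) show ?thesis using that by blast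
qed

text \<open>The difference quotient of \<open>r \<mapsto> \<integral>\<^sub>0\<^sup>r \<kappa>(\<sigma>) w(r - \<sigma>) d\<sigma>\<close> splits into the new piece on
  \<open>[r - h, r]\<close>, a first-order Taylor remainder of \<open>w\<close> under the integral, and a short tail.\<close>

lemma conv_increment_decomp:
  assumes h: "0 < h" "h < r" "r \<le> T"
  shows "integral {0..r} (\<lambda>\<sigma>. \<kappa> \<sigma> * w (r - \<sigma>)) - integral {0..r-h} (\<lambda>\<sigma>. \<kappa> \<sigma> * w (r - h - \<sigma>))
      - h * (\<kappa> r * w 0 + integral {0..r} (\<lambda>\<sigma>. \<kappa> \<sigma> * \<phi> (r - \<sigma>)))
    = integral {r-h..r} (\<lambda>\<sigma>. \<kappa> \<sigma> * w (r - \<sigma>) - \<kappa> r * w 0)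
      + integral {0..r-h} (\<lambda>\<sigma>. \<kappa> \<sigma> * (w (r - \<sigma>) - w (r - h - \<sigma>) - h * \<phi> (r - \<sigma>)))
      - h * integral {r-h..r} (\<lambda>\<sigma>. \<kappa> \<sigma> * \<phi> (r - \<sigma>))"
proof -
  define f1 where "f1 \<sigma> = \<kappa> \<sigma> * w (r - \<sigma>)" for \<sigma>
  define f2 where "f2 \<sigma> = \<kappa> \<sigma> * w (r - h - \<sigma>)" for \<sigma>
  define f3 where "f3 \<sigma> = \<kappa> \<sigma> * \<phi> (r - \<sigma>)" for \<sigma>
  have kc: "continuous_on {0..r} \<kappa>" using continuous_on_subset[OF kernel_cont] h by auto
  have i1: "f1 integrable_on {0..r}" "f3 integrable_on {0..r}"
    unfolding f1_def f3_def using h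
    by (auto intro!: integrable_continuous_interval continuous_intros kc
        continuous_on_reflect[OF w_cont] continuous_on_reflect[OF deriv_cont])
  have i2: "f2 integrable_on {0..r-h}" unfolding f2_def using h
    by (intro integrable_continuous_interval continuous_intros continuous_on_subset[OF kc]
        continuous_on_reflect[OF w_cont]) auto
  have i3: "f1 integrable_on {0..r-h}" "f1 integrable_on {r-h..r}"
    "f3 integrable_on {0..r-h}" "f3 integrable_on {r-h..r}"
    using i1 h by (auto intro: integrable_subinterval_real)
  have split: "integral {0..r} f = integral {0..r-h} f + integral {r-h..r} f"
    if "f integrable_on {0..r}" for f :: "real \<Rightarrow> real"
    using Henstock_Kurzweil_Integration.integral_combine[OF _ _ that, of "r-h"] h by simp
  have "integral {r-h..r} (\<lambda>\<sigma>. f1 \<sigma> - \<kappa> r * w 0) = integral {r-h..r} f1 - h * (\<kappa> r * w 0)"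
    using h i3 by (subst integral_diff) auto
  moreover have "integral {0..r-h} (\<lambda>\<sigma>. f1 \<sigma> - f2 \<sigma> - h * f3 \<sigma>)
      = integral {0..r-h} f1 - integral {0..r-h} f2 - h * integral {0..r-h} f3"
    using i2 i3 by (simp add: integral_diff integrable_diff integral_mult_right integrable_on_mult_right)
  moreover have "(\<lambda>\<sigma>. f1 \<sigma> - f2 \<sigma> - h * f3 \<sigma>)
      = (\<lambda>\<sigma>. \<kappa> \<sigma> * (w (r - \<sigma>) - w (r - h - \<sigma>) - h * \<phi> (r - \<sigma>)))"
    by (simp add: f1_def f2_def f3_def algebra_simps)
  ultimately show ?thesis
    unfolding f1_def[symmetric] f2_def[symmetric] f3_def[symmetric] split[OF i1(1)] split[OF i1(2)]
    by (simp add: algebra_simps)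
qed

lemma conv_quotient_estimate:
  fixes h r e Mp :: real
  assumes h: "0 < h" "h < r" "r \<le> T" and e: "0 \<le> e"
    and Mp: "\<And>s. s \<in> {0..T} \<Longrightarrow> \<bar>\<phi> s\<bar> \<le> Mp"
    and near: "\<And>\<sigma>. \<sigma> \<in> {r-h..r} \<Longrightarrow> \<bar>\<kappa> \<sigma> * w (r - \<sigma>) - \<kappa> r * w 0\<bar> \<le> e"
    and approx: "\<And>x. h \<le> x \<Longrightarrow> x \<le> T \<Longrightarrow> \<bar>w x - w (x - h) - h * \<phi> x\<bar> \<le> e * h"
  shows "\<bar>(integral {0..r} (\<lambda>\<sigma>. \<kappa> \<sigma> * w (r - \<sigma>)) - integral {0..r-h} (\<lambda>\<sigma>. \<kappa> \<sigma> * w (r - h - \<sigma>))) / h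
          - (\<kappa> r * w 0 + integral {0..r} (\<lambda>\<sigma>. \<kappa> \<sigma> * \<phi> (r - \<sigma>)))\<bar> \<le> e + Mk * e * r + Mk * Mp * h"
proof -
  have cont: "continuous_on {a..b} (\<lambda>\<sigma>. \<kappa> \<sigma> * g (r - \<sigma>))"
    if "continuous_on {0..T} g" "0 \<le> a" "b \<le> r" for a b and g :: "real \<Rightarrow> real"
    using that h by (intro continuous_intros continuous_on_subset[OF kernel_cont] continuous_on_reflect) auto
  have bX: "\<bar>integral {r-h..r} (\<lambda>\<sigma>. \<kappa> \<sigma> * w (r - \<sigma>) - \<kappa> r * w 0)\<bar> \<le> e * (r - (r - h))"
    (is "\<bar>?X\<bar> \<le> _")
    using near h e
    by (intro integral_abs_le_const integrable_diff integrable_continuous_interval cont[OF w_cont]) auto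
  have "\<bar>integral {0..r-h} (\<lambda>\<sigma>. \<kappa> \<sigma> * (w (r - \<sigma>) - w (r - h - \<sigma>) - h * \<phi> (r - \<sigma>)))\<bar>
      \<le> (Mk * (e * h)) * ((r - h) - 0)" (is "\<bar>?Y\<bar> \<le> _")
  proof (rule integral_abs_le_const)
    show "(\<lambda>\<sigma>. \<kappa> \<sigma> * (w (r - \<sigma>) - w (r - h - \<sigma>) - h * \<phi> (r - \<sigma>))) integrable_on {0..r - h}"
      using h by (intro integrable_continuous_interval continuous_intros continuous_on_subset[OF kernel_cont]
          continuous_on_reflect[OF w_cont] continuous_on_reflect[OF deriv_cont]) auto
    fix \<sigma> assume s: "\<sigma> \<in> {0..r - h}"
    have "\<bar>\<kappa> \<sigma>\<bar> \<le> Mk" "\<bar>w (r - \<sigma>) - w (r - h - \<sigma>) - h * \<phi> (r - \<sigma>)\<bar> \<le> e * h"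
      using kernel_bound approx[of "r - \<sigma>"] s h by (auto simp: algebra_simps)
    then show "\<bar>\<kappa> \<sigma> * (w (r - \<sigma>) - w (r - h - \<sigma>) - h * \<phi> (r - \<sigma>))\<bar> \<le> Mk * (e * h)"
      by (simp add: abs_mult mult_mono')
  qed (use Mk_nonneg e h in auto)
  also have "\<dots> \<le> Mk * e * r * h"
    using Mk_nonneg e h by (simp add: mult_left_mono algebra_simps)
  finally have bY: "\<bar>?Y\<bar> \<le> Mk * e * r * h" .
  have bZ: "\<bar>integral {r-h..r} (\<lambda>\<sigma>. \<kappa> \<sigma> * \<phi> (r - \<sigma>))\<bar> \<le> (Mk * Mp) * (r - (r - h))"
    (is "\<bar>?Z\<bar> \<le> _")
  proof (rule integral_abs_le_const)
    fix \<sigma> assume s: "\<sigma> \<in> {r - h..r}"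
    have "\<bar>\<kappa> \<sigma>\<bar> \<le> Mk" "\<bar>\<phi> (r - \<sigma>)\<bar> \<le> Mp" using kernel_bound Mp s h by auto
    then show "\<bar>\<kappa> \<sigma> * \<phi> (r - \<sigma>)\<bar> \<le> Mk * Mp" by (simp add: abs_mult mult_mono' Mk_nonneg)
  qed (use Mk_nonneg Mp[of 0] T_pos h cont[OF deriv_cont] in \<open>auto intro: integrable_continuous_interval\<close>)
  have "\<bar>?X + ?Y - h * ?Z\<bar> \<le> \<bar>?X\<bar> + \<bar>?Y\<bar> + h * \<bar>?Z\<bar>"
    using abs_triangle_ineq[of ?X ?Y] abs_triangle_ineq4[of "?X + ?Y" "h * ?Z"] h by (simp add: abs_mult)
  also have "\<dots> \<le> e * h + Mk * e * r * h + h * (Mk * Mp * h)"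
    using bX bY mult_left_mono[OF bZ, of h] h by (intro add_mono) auto
  also have "\<dots> = (e + Mk * e * r + Mk * Mp * h) * h" by (simp add: algebra_simps)
  finally have "\<bar>?X + ?Y - h * ?Z\<bar> \<le> (e + Mk * e * r + Mk * Mp * h) * h" .
  then have "\<bar>integral {0..r} (\<lambda>\<sigma>. \<kappa> \<sigma> * w (r - \<sigma>)) - integral {0..r-h} (\<lambda>\<sigma>. \<kappa> \<sigma> * w (r - h - \<sigma>))
      - h * (\<kappa> r * w 0 + integral {0..r} (\<lambda>\<sigma>. \<kappa> \<sigma> * \<phi> (r - \<sigma>)))\<bar> \<le> (e + Mk * e * r + Mk * Mp * h) * h"
    unfolding conv_increment_decomp[OF h] .
  moreover have "\<bar>(a - b) / h - v\<bar> = \<bar>a - b - h * v\<bar> / h" for a b v :: real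
  proof -
    have "(a - b) / h - v = (a - b - h * v) / h" using h by (simp add: field_simps)
    then show ?thesis using h by (simp add: abs_divide)
  qed
  ultimately show ?thesis using h by (simp add: pos_divide_le_eq)
qed

lemma conv_left_quotient_tendsto:
  assumes r: "0 < r" "r \<le> T"
  shows "((\<lambda>h. (integral {0..r} (\<lambda>\<sigma>. \<kappa> \<sigma> * w (r - \<sigma>)) - integral {0..r-h} (\<lambda>\<sigma>. \<kappa> \<sigma> * w (r - h - \<sigma>))) / h)
          \<longlongrightarrow> \<kappa> r * w 0 + conv_deriv r) (at_right 0)"
proof -
  have V: "conv_deriv r = integral {0..r} (\<lambda>\<sigma>. \<kappa> \<sigma> * \<phi> (r - \<sigma>))"
    unfolding conv_deriv_def using integral_reflect_Icc0[where f="\<lambda>\<sigma>. \<kappa> \<sigma> * \<phi> (r - \<sigma>)" and r=r] by simp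
  obtain Mp where Mp: "0 \<le> Mp" "\<And>s. s \<in> {0..T} \<Longrightarrow> \<bar>\<phi> s\<bar> \<le> Mp" using deriv_bounded by blast
  show ?thesis unfolding V
  proof (rule tendsto_by_eventually_le)
    fix e :: real assume e: "0 < e"
    define e' where "e' = e / (2 + Mk * r)"
    have "0 < 2 + Mk * r" using Mk_nonneg r by (simp add: add_pos_nonneg)
    have e': "0 < e'" "e' * (2 + Mk * r) = e"
      using e \<open>0 < 2 + Mk * r\<close> by (auto simp: e'_def)
    have "continuous_on {0..r} (\<lambda>\<sigma>. \<kappa> \<sigma> * w (r - \<sigma>))"
      using r by (intro continuous_intros continuous_on_subset[OF kernel_cont] continuous_on_reflect[OF w_cont]) auto
    then have "uniformly_continuous_on {0..r} (\<lambda>\<sigma>. \<kappa> \<sigma> * w (r - \<sigma>))"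
      by (rule compact_uniformly_continuous[OF _ compact_Icc])
    then obtain d1 where d1: "d1 > 0" "\<And>x y. x \<in> {0..r} \<Longrightarrow> y \<in> {0..r} \<Longrightarrow> dist y x < d1 \<Longrightarrow>
        dist (\<kappa> y * w (r - y)) (\<kappa> x * w (r - x)) < e'"
      unfolding uniformly_continuous_on_def using e' by metis
    obtain d2 where d2: "d2 > 0" "\<And>x h. 0 < h \<Longrightarrow> h < d2 \<Longrightarrow> h \<le> x \<Longrightarrow> x \<le> T \<Longrightarrow>
        \<bar>w x - w (x - h) - h * \<phi> x\<bar> \<le> e' * h"
      using w_increment_approx[OF e'(1)] by blast
    define d where "d = min (min d1 d2) (min (e' / (Mk * Mp + 1)) r)"
    have "0 < d" using d1 d2 e' Mk_nonneg Mp r by (simp add: d_def add_nonneg_pos)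
    then have "eventually (\<lambda>h. 0 < h \<and> h < d) (at_right (0::real))"
      by (auto simp: eventually_at_right[of 0] intro!: exI[of _ d])
    then show "eventually (\<lambda>h. \<bar>(integral {0..r} (\<lambda>\<sigma>. \<kappa> \<sigma> * w (r - \<sigma>))
        - integral {0..r-h} (\<lambda>\<sigma>. \<kappa> \<sigma> * w (r - h - \<sigma>))) / h
        - (\<kappa> r * w 0 + integral {0..r} (\<lambda>\<sigma>. \<kappa> \<sigma> * \<phi> (r - \<sigma>)))\<bar> \<le> e) (at_right 0)"
    proof eventually_elim
      case (elim h)
      then have h: "0 < h" "h < d1" "h < d2" "h < r" "h < e' / (Mk * Mp + 1)"
        by (auto simp: d_def)
      have "Mk * Mp * h \<le> e'"
      proof -
        have "0 < Mk * Mp + 1" using Mk_nonneg Mp by (simp add: add_nonneg_pos)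
        then have "h * (Mk * Mp + 1) < e'" using h(5) by (simp add: pos_less_divide_eq)
        then show ?thesis using h(1) by (simp add: algebra_simps)
      qed
      have near: "\<bar>\<kappa> \<sigma> * w (r - \<sigma>) - \<kappa> r * w 0\<bar> \<le> e'" if "\<sigma> \<in> {r-h..r}" for \<sigma>
        using d1(2)[of r \<sigma>] that h r by (auto simp: dist_real_def)
      have approx: "\<bar>w x - w (x - h) - h * \<phi> x\<bar> \<le> e' * h" if "h \<le> x" "x \<le> T" for x
        using d2(2) that h by auto
      have "\<bar>(integral {0..r} (\<lambda>\<sigma>. \<kappa> \<sigma> * w (r - \<sigma>)) - integral {0..r-h} (\<lambda>\<sigma>. \<kappa> \<sigma> * w (r - h - \<sigma>))) / h
          - (\<kappa> r * w 0 + integral {0..r} (\<lambda>\<sigma>. \<kappa> \<sigma> * \<phi> (r - \<sigma>)))\<bar> \<le> e' + Mk * e' * r + Mk * Mp * h"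
        by (rule conv_quotient_estimate[OF _ _ _ _ Mp(2) near approx]) (use h r e' in auto)
      also have "\<dots> \<le> e' * (2 + Mk * r)"
        using \<open>Mk * Mp * h \<le> e'\<close> by (simp add: algebra_simps)
      finally show ?case using e' by simp
    qed
  qed
qed

lemma conv_deriv_formula:
  fixes K :: "real \<Rightarrow> real" and \<zeta> D r :: real
  assumes r: "0 < r" "r \<le> T"
    and K: "\<And>s. 0 < s \<Longrightarrow> s \<le> T \<Longrightarrow> K s = \<kappa> s"
    and der: "((\<lambda>r. \<zeta> * integral {0..r} (\<lambda>s. K (r - s) * w s)) has_real_derivative D) (at r within {0..T})"
  shows "D = \<zeta> * (\<kappa> r * w 0 + conv_deriv r)"
proof -
  define Q where "Q x = integral {0..x} (\<lambda>\<sigma>. \<kappa> \<sigma> * w (x - \<sigma>))" for x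
  have QK: "integral {0..x} (\<lambda>s. K (x - s) * w s) = Q x" if "0 \<le> x" "x \<le> T" for x
  proof -
    have "integral {0..x} (\<lambda>s. K (x - s) * w s) = integral {0..x} (\<lambda>\<sigma>. K \<sigma> * w (x - \<sigma>))"
      using integral_reflect_Icc0[where f="\<lambda>\<sigma>. K \<sigma> * w (x - \<sigma>)" and r=x] by simp
    also have "\<dots> = Q x" unfolding Q_def
      by (rule integral_spike[of "{0}"]) (use that K in auto)
    finally show ?thesis .
  qed
  have lim_D: "((\<lambda>h. (\<zeta> * integral {0..r} (\<lambda>s. K (r - s) * w s)
      - \<zeta> * integral {0..r-h} (\<lambda>s. K (r - h - s) * w s)) / h) \<longlongrightarrow> D) (at_right 0)"
    (is "(?K \<longlongrightarrow> D) _")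
    by (rule has_real_derivative_left_quotient[OF der r])
  have "((\<lambda>h. \<zeta> * ((Q r - Q (r - h)) / h)) \<longlongrightarrow> \<zeta> * (\<kappa> r * w 0 + conv_deriv r)) (at_right 0)"
    unfolding Q_def by (intro tendsto_mult_left conv_left_quotient_tendsto r)
  moreover have "eventually (\<lambda>h. \<zeta> * ((Q r - Q (r - h)) / h) = ?K h) (at_right 0)"
    using eventually_at_right[of 0 r] r by (auto simp: QK right_diff_distrib intro!: exI[of _ r])
  ultimately have "(?K \<longlongrightarrow> \<zeta> * (\<kappa> r * w 0 + conv_deriv r)) (at_right 0)"
    by (rule Lim_transform_eventually)
  with lim_D show ?thesis by (rule tendsto_unique[OF trivial_limit_at_right_real])
qed

lemma conv_deriv_integrable:
  "0 \<le> y \<Longrightarrow> y \<le> x \<Longrightarrow> x \<le> T \<Longrightarrow> (\<lambda>u. \<kappa> (x - u) * \<phi> u) integrable_on {0..y}"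
  by (intro integrable_continuous_interval continuous_intros continuous_on_reflect[OF kernel_cont]
        continuous_on_subset[OF deriv_cont]) auto

lemma conv_deriv_diff:
  assumes "0 \<le> y" "y \<le> x" "x \<le> T"
  shows "conv_deriv x - conv_deriv y = integral {y..x} (\<lambda>u. \<kappa> (x - u) * \<phi> u)
    + integral {0..y} (\<lambda>u. (\<kappa> (x - u) - \<kappa> (y - u)) * \<phi> u)"
proof -
  have "conv_deriv x = integral {0..y} (\<lambda>u. \<kappa> (x - u) * \<phi> u) + integral {y..x} (\<lambda>u. \<kappa> (x - u) * \<phi> u)"
    unfolding conv_deriv_def
    using Henstock_Kurzweil_Integration.integral_combine[OF _ _ conv_deriv_integrable[of x x]] assms by simp
  moreover have "integral {0..y} (\<lambda>u. (\<kappa> (x - u) - \<kappa> (y - u)) * \<phi> u)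
      = integral {0..y} (\<lambda>u. \<kappa> (x - u) * \<phi> u) - conv_deriv y"
    unfolding conv_deriv_def using conv_deriv_integrable[of y x] conv_deriv_integrable[of y y] assms
    by (subst integral_diff[symmetric]) (auto simp: algebra_simps)
  ultimately show ?thesis by simp
qed

lemma conv_deriv_lipschitz:
  obtains L where "\<And>x y. 0 \<le> y \<Longrightarrow> y \<le> x \<Longrightarrow> x \<le> T \<Longrightarrow> \<bar>conv_deriv x - conv_deriv y\<bar> \<le> L * (x - y)"
proof -
  obtain Mp where Mp: "0 \<le> Mp" "\<And>s. s \<in> {0..T} \<Longrightarrow> \<bar>\<phi> s\<bar> \<le> Mp" using deriv_bounded by blast
  have "\<bar>conv_deriv x - conv_deriv y\<bar> \<le> Mp * (Mk + 2 * Ck * sqrt T) * (x - y)"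
    if xy: "0 \<le> y" "y \<le> x" "x \<le> T" for x y
  proof -
    have a: "\<bar>integral {y..x} (\<lambda>u. \<kappa> (x - u) * \<phi> u)\<bar> \<le> (Mk * Mp) * (x - y)"
    proof (rule integral_abs_le_const)
      show "(\<lambda>u. \<kappa> (x - u) * \<phi> u) integrable_on {y..x}"
        using conv_deriv_integrable[of x x] xy by (auto intro: integrable_subinterval_real)
      fix u assume u: "u \<in> {y..x}"
      have "\<bar>\<kappa> (x - u)\<bar> \<le> Mk" "\<bar>\<phi> u\<bar> \<le> Mp" using kernel_bound[of "x-u"] Mp(2)[of u] u xy by auto
      then show "\<bar>\<kappa> (x - u) * \<phi> u\<bar> \<le> Mk * Mp" by (simp add: abs_mult mult_mono' Mk_nonneg)
    qed (use Mk_nonneg Mp xy in auto)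
    have b: "\<bar>integral {0..y} (\<lambda>u. (\<kappa> (x - u) - \<kappa> (y - u)) * \<phi> u)\<bar> \<le> Mp * (2 * Ck * sqrt T) * (x - y)"
    proof (cases "y = 0")
      case False
      then have y: "0 < y" using xy by auto
      have "\<bar>integral {0..y} (\<lambda>u. (\<kappa> (x - u) - \<kappa> (y - u)) * \<phi> u)\<bar>
          \<le> integral {0..y} (\<lambda>u. Mp * Ck * (x - y) * (y - u) powr (-(1/2)))"
      proof (rule integral_abs_le_open_interval)
        show "(\<lambda>u. (\<kappa> (x - u) - \<kappa> (y - u)) * \<phi> u) integrable_on {0..y}"
          using integrable_diff[OF conv_deriv_integrable[of y x] conv_deriv_integrable[of y y]] xy
          by (simp add: algebra_simps)
        show "(\<lambda>u. Mp * Ck * (x - y) * (y - u) powr (-(1/2))) integrable_on {0..y}"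
          using has_integral_reflect_powr_neg[of "1/2" y] y
          by (intro integrable_on_mult_right) (auto simp: integrable_on_def)
        fix u assume u: "0 < u" "u < y"
        have "\<bar>\<kappa> (x - u) - \<kappa> (y - u)\<bar> \<le> Ck * (x - y) * (y - u) powr (-1/2)"
          using kernel_increment[of "y - u" "x - u"] u xy by auto
        moreover have "\<bar>\<phi> u\<bar> \<le> Mp" using Mp(2)[of u] u xy by auto
        ultimately have "\<bar>\<kappa> (x - u) - \<kappa> (y - u)\<bar> * \<bar>\<phi> u\<bar> \<le> (Ck * (x - y) * (y - u) powr (-1/2)) * Mp"
          by (intro mult_mono) auto
        then show "\<bar>(\<kappa> (x - u) - \<kappa> (y - u)) * \<phi> u\<bar> \<le> Mp * Ck * (x - y) * (y - u) powr (-(1/2))"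
          by (simp add: abs_mult mult_ac)
      qed
      also have "\<dots> = Mp * Ck * (x - y) * (2 * sqrt y)"
        using has_integral_reflect_powr_neg[of "1/2" y] y
        by (simp add: integral_mult_right integral_unique powr_half_sqrt)
      also have "\<dots> \<le> Mp * Ck * (x - y) * (2 * sqrt T)"
        using Mp Ck_nonneg xy by (intro mult_left_mono) auto
      finally show ?thesis by (simp add: algebra_simps)
    qed (use Mp Ck_nonneg xy in simp)
    show ?thesis
      using conv_deriv_diff[OF xy] a b by (simp add: algebra_simps)
  qed
  then show ?thesis using that by blast
qed

lemma continuous_on_conv_deriv: "continuous_on {0..T} conv_deriv"
proof -
  obtain L where L: "\<And>x y. 0 \<le> y \<Longrightarrow> y \<le> x \<Longrightarrow> x \<le> T \<Longrightarrow> \<bar>conv_deriv x - conv_deriv y\<bar> \<le> L * (x - y)"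
    using conv_deriv_lipschitz by blast
  have "(max L 0)-lipschitz_on {0..T} conv_deriv"
  proof (rule lipschitz_onI)
    fix x y assume xy: "x \<in> {0..T}" "y \<in> {0..T}"
    have bound: "dist (conv_deriv a) (conv_deriv b) \<le> max L 0 * dist a b"
      if "b \<le> a" "a \<in> {0..T}" "b \<in> {0..T}" for a b
      using L[of b a] that mult_right_mono[of L "max L 0" "a - b"] by (simp add: dist_real_def)
    show "dist (conv_deriv x) (conv_deriv y) \<le> max L 0 * dist x y"
      using bound[of y x] bound[of x y] xy by (cases "y \<le> x") (auto simp: dist_commute)
  qed simp
  then show ?thesis by (rule lipschitz_on_continuous_on)
qed

lemma conv_deriv_abs_le:
  assumes Mp: "\<And>s. s \<in> {0..T} \<Longrightarrow> \<bar>\<phi> s\<bar> \<le> Mp" and z: "0 \<le> z" "z \<le> T"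
  shows "\<bar>conv_deriv z\<bar> \<le> Mk * Mp * z"
proof -
  have "\<bar>conv_deriv z\<bar> \<le> (Mk * Mp) * (z - 0)"
    unfolding conv_deriv_def
  proof (rule integral_abs_le_const)
    fix u assume u: "u \<in> {0..z}"
    have "\<bar>\<kappa> (z - u)\<bar> \<le> Mk" "\<bar>\<phi> u\<bar> \<le> Mp" using kernel_bound[of "z-u"] Mp[of u] u z by auto
    then show "\<bar>\<kappa> (z - u) * \<phi> u\<bar> \<le> Mk * Mp" by (simp add: abs_mult mult_mono' Mk_nonneg)
  qed (use Mk_nonneg Mp[of 0] T_pos conv_deriv_integrable[of z z] z in auto)
  then show ?thesis by simp
qed

text \<open>To use Tonelli's theorem the derivative is extended to a continuous function on all of \<open>\<real>\<close>.\<close>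

definition deriv_ext :: "real \<Rightarrow> real" where
  "deriv_ext u = \<phi> (max 0 (min T u))"

lemma deriv_ext_borel[measurable]: "deriv_ext \<in> borel_measurable borel"
proof (rule borel_measurable_continuous_onI)
  show "continuous_on UNIV deriv_ext" unfolding deriv_ext_def
    by (rule continuous_on_compose2[OF deriv_cont]) (use T_pos in \<open>auto intro!: continuous_intros\<close>)
qed

lemma deriv_ext_eq: "u \<in> {0..T} \<Longrightarrow> deriv_ext u = \<phi> u"
  by (auto simp: deriv_ext_def)

definition abel_half_mass :: "real \<Rightarrow> ennreal" where
  "abel_half_mass y = (\<integral>\<^sup>+u. ennreal (indicator {0..y} u * (y - u) powr (-1/2) * \<bar>deriv_ext u\<bar>) \<partial>lborel)"

lemma abel_half_mass_borel[measurable]: "abel_half_mass \<in> borel_measurable borel"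
proof -
  have "(\<lambda>(z, u). ennreal ((if 0 \<le> u \<and> u \<le> z then 1 else 0) * (z - u) powr (-1/2) * \<bar>deriv_ext u\<bar>))
      \<in> borel_measurable (borel \<Otimes>\<^sub>M borel)"
    by measurable
  then have "(\<lambda>(z, u). ennreal ((if 0 \<le> u \<and> u \<le> z then 1 else 0) * (z - u) powr (-1/2) * \<bar>deriv_ext u\<bar>))
      \<in> borel_measurable (lborel \<Otimes>\<^sub>M lborel)"
    by (subst measurable_cong_sets[OF sets_pair_measure_cong[OF sets_lborel sets_lborel] refl])
  from lborel.borel_measurable_nn_integral_fst[OF this] show ?thesis
    unfolding abel_half_mass_def indicator_def by (simp add: measurable_lborel1 of_bool_def)
qed

lemma conv_deriv_increment_nn:
  assumes h: "0 < h" "h \<le> x" "x \<le> T"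
    and e: "\<And>u v. u \<in> {0..T} \<Longrightarrow> v \<in> {0..T} \<Longrightarrow> \<bar>u - v\<bar> \<le> h \<Longrightarrow> \<bar>\<phi> u - \<phi> v\<bar> \<le> e"
  shows "ennreal \<bar>conv_deriv x - conv_deriv (x - h)\<bar>
    \<le> ennreal (Mk * h * (\<bar>\<phi> x\<bar> + e)) + ennreal (Ck * h) * abel_half_mass (x - h)"
proof -
  have e0: "0 \<le> e" using e[of x x] h by auto
  define A1 where "A1 = integral {x-h..x} (\<lambda>u. \<kappa> (x - u) * \<phi> u)"
  define A2 where "A2 = integral {0..x-h} (\<lambda>u. (\<kappa> (x - u) - \<kappa> (x - h - u)) * \<phi> u)"
  have bA1: "\<bar>A1\<bar> \<le> (Mk * (\<bar>\<phi> x\<bar> + e)) * (x - (x - h))"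
    unfolding A1_def
  proof (rule integral_abs_le_const)
    show "(\<lambda>u. \<kappa> (x - u) * \<phi> u) integrable_on {x - h..x}"
      using conv_deriv_integrable[of x x] h by (auto intro: integrable_subinterval_real)
    fix u assume u: "u \<in> {x - h..x}"
    have "\<bar>\<kappa> (x - u)\<bar> \<le> Mk" "\<bar>\<phi> u\<bar> \<le> \<bar>\<phi> x\<bar> + e" using kernel_bound[of "x-u"] e[of u x] u h by auto
    then show "\<bar>\<kappa> (x - u) * \<phi> u\<bar> \<le> Mk * (\<bar>\<phi> x\<bar> + e)"
      by (simp add: abs_mult mult_mono')
  qed (use Mk_nonneg e0 h in auto)
  have abs2: "(\<lambda>u. (\<kappa> (x - u) - \<kappa> (x - h - u)) * \<phi> u) absolutely_integrable_on {0..x-h}"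
    by (intro absolutely_integrable_continuous_real continuous_intros continuous_on_reflect[OF kernel_cont]
        continuous_on_subset[OF deriv_cont]) (use h in auto)
  have "ennreal \<bar>A2\<bar>
      \<le> (\<integral>\<^sup>+u. ennreal (indicator {0..x-h} u * \<bar>(\<kappa> (x - u) - \<kappa> (x - h - u)) * \<phi> u\<bar>) \<partial>lborel)"
    unfolding A2_def by (rule abs_integral_le_nn_integral[OF abs2])
  also have "\<dots> \<le> (\<integral>\<^sup>+u. ennreal (Ck * h)
      * ennreal (indicator {0..x-h} u * (x - h - u) powr (-1/2) * \<bar>deriv_ext u\<bar>) \<partial>lborel)"
  proof (rule nn_integral_mono_AE)
    show "AE u in lborel. ennreal (indicator {0..x-h} u * \<bar>(\<kappa> (x - u) - \<kappa> (x - h - u)) * \<phi> u\<bar>)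
        \<le> ennreal (Ck * h) * ennreal (indicator {0..x-h} u * (x - h - u) powr (-1/2) * \<bar>deriv_ext u\<bar>)"
      using AE_lborel_singleton[of "x - h"]
    proof eventually_elim
      case (elim u)
      show ?case
      proof (cases "u \<in> {0..x-h}")
        case True
        then have u: "0 \<le> u" "u < x - h" using elim by auto
        have "\<bar>\<kappa> (x - u) - \<kappa> (x - h - u)\<bar> \<le> Ck * h * (x - h - u) powr (-1/2)"
          using kernel_increment[of "x - h - u" "x - u"] u h by auto
        then have "\<bar>(\<kappa> (x - u) - \<kappa> (x - h - u)) * \<phi> u\<bar> \<le> Ck * h * ((x - h - u) powr (-1/2) * \<bar>deriv_ext u\<bar>)"
          using deriv_ext_eq[of u] u h by (simp add: abs_mult mult_right_mono mult.assoc[symmetric])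
        then show ?thesis using True Ck_nonneg h
          by (simp add: ennreal_mult[symmetric] ennreal_leI mult.assoc)
      qed simp
    qed
  qed
  also have "\<dots> = ennreal (Ck * h) * abel_half_mass (x - h)"
    unfolding abel_half_mass_def by (rule nn_integral_cmult) measurable
  finally have bA2: "ennreal \<bar>A2\<bar> \<le> ennreal (Ck * h) * abel_half_mass (x - h)" .
  have "conv_deriv x - conv_deriv (x - h) = A1 + A2"
    unfolding A1_def A2_def using conv_deriv_diff[of "x - h" x] h by simp
  then have "ennreal \<bar>conv_deriv x - conv_deriv (x - h)\<bar> \<le> ennreal \<bar>A1\<bar> + ennreal \<bar>A2\<bar>"
    by (simp add: ennreal_plus[symmetric] ennreal_leI del: ennreal_plus)
  also have "\<dots> \<le> ennreal (Mk * h * (\<bar>\<phi> x\<bar> + e)) + ennreal (Ck * h) * abel_half_mass (x - h)"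
    using bA1 bA2 h by (intro add_mono ennreal_leI) (auto simp: algebra_simps)
  finally show ?thesis .
qed

end

section \<open>The fractional integral and its left difference quotients\<close>

locale frac_kernel_conv = kernel_conv +
  fixes \<epsilon> :: real
  assumes eps_nonneg: "0 \<le> \<epsilon>" and eps_le: "\<epsilon> \<le> 1/4"
begin

definition frac_kernel :: "real \<Rightarrow> real" where
  "frac_kernel x = integral {0..x} (\<lambda>\<sigma>. \<sigma> powr (-\<epsilon>) * \<kappa> (x - \<sigma>))"

definition frac_conv_deriv :: "real \<Rightarrow> real" where
  "frac_conv_deriv x = integral {0..x} (\<lambda>\<sigma>. \<sigma> powr (-\<epsilon>) * conv_deriv (x - \<sigma>))"

definition weighted_abs_deriv :: "real \<Rightarrow> real" where
  "weighted_abs_deriv t = integral {0..t} (\<lambda>u. (t - u) powr (-\<epsilon>) * \<bar>\<phi> u\<bar>)"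

lemma eps_lt_1: "\<epsilon> < 1"
  using eps_le by simp

text \<open>\<open>\<epsilon> \<le> 1/4\<close> keeps the Beta-type constant \<open>2 / (1/2 - \<epsilon>)\<close> below 8.\<close>

lemma beta_integral_le:
  assumes "0 \<le> z'" "z' \<le> z" "0 < z" "z \<le> T"
  shows "2 * (z' powr (1 - (\<epsilon> + 1/2)) / (1 - (\<epsilon> + 1/2))) \<le> 8 * sqrt T * z powr (-\<epsilon>)"
proof -
  have "z' powr (1 - (\<epsilon> + 1/2)) \<le> z powr (1 - (\<epsilon> + 1/2))"
    using assms eps_le by (intro powr_mono2) auto
  also have "\<dots> = sqrt z * z powr (-\<epsilon>)"
    using assms by (simp add: powr_add[symmetric] powr_half_sqrt[symmetric])
  also have "\<dots> \<le> sqrt T * z powr (-\<epsilon>)" using assms by (intro mult_right_mono) auto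
  finally have a: "z' powr (1 - (\<epsilon> + 1/2)) \<le> sqrt T * z powr (-\<epsilon>)" .
  have "2 / (1 - (\<epsilon> + 1/2)) \<le> 8" using eps_nonneg eps_le by (simp add: field_simps)
  with a have "2 / (1 - (\<epsilon> + 1/2)) * z' powr (1 - (\<epsilon> + 1/2)) \<le> 8 * (sqrt T * z powr (-\<epsilon>))"
    by (intro mult_mono) auto
  then show ?thesis by simp
qed

lemma nn_integral_beta_le:
  assumes "0 \<le> z'" "z' \<le> z" "0 < z" "z \<le> T"
  shows "(\<integral>\<^sup>+\<sigma>. ennreal (indicator {0..z'} \<sigma> * (\<sigma> powr (-\<epsilon>) * (z' - \<sigma>) powr (-1/2))) \<partial>lborel)
    \<le> ennreal (8 * sqrt T * z powr (-\<epsilon>))"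
  using order_trans[OF nn_integral_powr_neg_product_le[OF eps_nonneg _ assms(1)]
      ennreal_leI[OF beta_integral_le[OF assms]]] eps_le
  by simp

lemma kernel_increment_weighted_integral:
  assumes y: "0 < y" "y \<le> x" "x \<le> T"
  shows "\<bar>integral {0..y} (\<lambda>\<sigma>. \<sigma> powr (-\<epsilon>) * (\<kappa> (x - \<sigma>) - \<kappa> (y - \<sigma>)))\<bar>
    \<le> 8 * Ck * sqrt T * (x - y) * y powr (-\<epsilon>)"
proof -
  define p where "p = \<epsilon> + 1/2"
  have p: "0 \<le> p" "p < 1" using eps_nonneg eps_le by (auto simp: p_def)
  have int: "((\<lambda>\<sigma>. Ck * (x - y) * (\<sigma> powr (-p) + (y - \<sigma>) powr (-p)))
      has_integral Ck * (x - y) * (2 * (y powr (1 - p) / (1 - p)))) {0..y}"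
    using has_integral_powr_neg_both_ends[OF p, of y] y by (intro has_integral_mult_right) auto
  have "\<bar>integral {0..y} (\<lambda>\<sigma>. \<sigma> powr (-\<epsilon>) * (\<kappa> (x - \<sigma>) - \<kappa> (y - \<sigma>)))\<bar>
      \<le> integral {0..y} (\<lambda>\<sigma>. Ck * (x - y) * (\<sigma> powr (-p) + (y - \<sigma>) powr (-p)))"
  proof (rule integral_abs_le_open_interval)
    show "(\<lambda>\<sigma>. \<sigma> powr (-\<epsilon>) * (\<kappa> (x - \<sigma>) - \<kappa> (y - \<sigma>))) integrable_on {0..y}"
      using y eps_nonneg eps_lt_1
      by (intro integrable_powr_neg_mult continuous_intros continuous_on_reflect[OF kernel_cont]) auto
    show "(\<lambda>\<sigma>. Ck * (x - y) * (\<sigma> powr (-p) + (y - \<sigma>) powr (-p))) integrable_on {0..y}"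
      using int by blast
    fix \<sigma> assume s: "0 < \<sigma>" "\<sigma> < y"
    have "\<bar>\<kappa> (x - \<sigma>) - \<kappa> (y - \<sigma>)\<bar> \<le> Ck * (x - y) * (y - \<sigma>) powr (-1/2)"
      using kernel_increment[of "y - \<sigma>" "x - \<sigma>"] s y by auto
    then have "\<sigma> powr (-\<epsilon>) * \<bar>\<kappa> (x - \<sigma>) - \<kappa> (y - \<sigma>)\<bar>
        \<le> \<sigma> powr (-\<epsilon>) * (Ck * (x - y) * (y - \<sigma>) powr (-1/2))"
      by (intro mult_left_mono) auto
    then have "\<bar>\<sigma> powr (-\<epsilon>) * (\<kappa> (x - \<sigma>) - \<kappa> (y - \<sigma>))\<bar>
        \<le> Ck * (x - y) * (\<sigma> powr (-\<epsilon>) * (y - \<sigma>) powr (-1/2))"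
      by (simp add: abs_mult mult_ac)
    also have "\<dots> \<le> Ck * (x - y) * (\<sigma> powr (-p) + (y - \<sigma>) powr (-p))"
      using powr_neg_product_le_sum[OF s eps_nonneg] Ck_nonneg y unfolding p_def
      by (intro mult_left_mono) auto
    finally show "\<bar>\<sigma> powr (-\<epsilon>) * (\<kappa> (x - \<sigma>) - \<kappa> (y - \<sigma>))\<bar>
        \<le> Ck * (x - y) * (\<sigma> powr (-p) + (y - \<sigma>) powr (-p))" .
  qed
  also have "\<dots> = Ck * (x - y) * (2 * (y powr (1 - p) / (1 - p)))"
    using int by (rule integral_unique)
  also have "\<dots> \<le> Ck * (x - y) * (8 * sqrt T * y powr (-\<epsilon>))"
    using beta_integral_le[of y y] y Ck_nonneg unfolding p_def by (intro mult_left_mono) auto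
  finally show ?thesis by (simp add: mult_ac)
qed

lemma frac_kernel_increment:
  assumes y: "0 < y" "y \<le> x" "x \<le> T"
  shows "\<bar>frac_kernel x - frac_kernel y\<bar> \<le> (Mk + 8 * Ck * sqrt T) * (x - y) * y powr (-\<epsilon>)"
proof -
  have ix: "(\<lambda>\<sigma>. \<sigma> powr (-\<epsilon>) * \<kappa> (x - \<sigma>)) integrable_on {0..x}"
    using y eps_nonneg eps_lt_1 by (intro integrable_powr_neg_mult continuous_on_reflect[OF kernel_cont]) auto
  then have ixa: "(\<lambda>\<sigma>. \<sigma> powr (-\<epsilon>) * \<kappa> (x - \<sigma>)) integrable_on {0..y}"
    "(\<lambda>\<sigma>. \<sigma> powr (-\<epsilon>) * \<kappa> (x - \<sigma>)) integrable_on {y..x}"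
    using y by (auto intro: integrable_subinterval_real)
  have iy: "(\<lambda>\<sigma>. \<sigma> powr (-\<epsilon>) * \<kappa> (y - \<sigma>)) integrable_on {0..y}"
    using y eps_nonneg eps_lt_1 by (intro integrable_powr_neg_mult continuous_on_reflect[OF kernel_cont]) auto
  have "frac_kernel x - frac_kernel y
      = integral {0..y} (\<lambda>\<sigma>. \<sigma> powr (-\<epsilon>) * (\<kappa> (x - \<sigma>) - \<kappa> (y - \<sigma>)))
        + integral {y..x} (\<lambda>\<sigma>. \<sigma> powr (-\<epsilon>) * \<kappa> (x - \<sigma>))"
    using Henstock_Kurzweil_Integration.integral_combine[OF _ _ ix, of y] integral_diff[OF ixa(1) iy] y
    unfolding frac_kernel_def by (simp add: algebra_simps)
  moreover have "\<bar>integral {y..x} (\<lambda>\<sigma>. \<sigma> powr (-\<epsilon>) * \<kappa> (x - \<sigma>))\<bar> \<le> (Mk * y powr (-\<epsilon>)) * (x - y)"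
  proof (rule integral_abs_le_const)
    fix \<sigma> assume s: "\<sigma> \<in> {y..x}"
    have "\<sigma> powr (-\<epsilon>) \<le> y powr (-\<epsilon>)" using s y eps_nonneg by (intro powr_mono2') auto
    moreover have "\<bar>\<kappa> (x - \<sigma>)\<bar> \<le> Mk" using kernel_bound[of "x - \<sigma>"] s y by auto
    ultimately have "\<sigma> powr (-\<epsilon>) * \<bar>\<kappa> (x - \<sigma>)\<bar> \<le> y powr (-\<epsilon>) * Mk"
      by (intro mult_mono) auto
    then show "\<bar>\<sigma> powr (-\<epsilon>) * \<kappa> (x - \<sigma>)\<bar> \<le> Mk * y powr (-\<epsilon>)"
      by (simp add: abs_mult mult.commute)
  qed (use ixa y Mk_nonneg in auto)
  ultimately show ?thesis
    using kernel_increment_weighted_integral[OF y] by (simp add: algebra_simps)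
qed

lemma frac_integral_formula:
  fixes \<zeta> :: real and D1 :: "real \<Rightarrow> real"
  assumes r: "0 < r" "r \<le> T"
    and D1: "\<And>s. 0 < s \<Longrightarrow> s \<le> r \<Longrightarrow> D1 s = \<zeta> * (\<kappa> s * w 0 + conv_deriv s)"
  shows "integral {0..r} (\<lambda>s. (r - s) powr (-\<epsilon>) * D1 s) = \<zeta> * (w 0 * frac_kernel r + frac_conv_deriv r)"
proof -
  have cd: "continuous_on {0..r} conv_deriv" "continuous_on {0..r} \<kappa>"
    using r by (auto intro: continuous_on_subset[OF continuous_on_conv_deriv] continuous_on_subset[OF kernel_cont])
  have j: "(\<lambda>s. (r - s) powr (-\<epsilon>) * \<kappa> s) integrable_on {0..r}"
    "(\<lambda>s. (r - s) powr (-\<epsilon>) * conv_deriv s) integrable_on {0..r}"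
    using cd r eps_nonneg eps_lt_1 by (auto intro!: integrable_reflect_powr_neg_mult)
  have "integral {0..r} (\<lambda>s. (r - s) powr (-\<epsilon>) * D1 s) = integral {0..r}
      (\<lambda>s. \<zeta> * w 0 * ((r - s) powr (-\<epsilon>) * \<kappa> s) + \<zeta> * ((r - s) powr (-\<epsilon>) * conv_deriv s))"
    by (rule integral_spike[of "{0}"]) (use D1 in \<open>auto simp: algebra_simps\<close>)
  also have "\<dots> = \<zeta> * w 0 * integral {0..r} (\<lambda>s. (r - s) powr (-\<epsilon>) * \<kappa> s)
      + \<zeta> * integral {0..r} (\<lambda>s. (r - s) powr (-\<epsilon>) * conv_deriv s)"
    using j by (simp add: integral_add integrable_on_mult_right integral_mult_right)
  also have "integral {0..r} (\<lambda>s. (r - s) powr (-\<epsilon>) * \<kappa> s) = frac_kernel r"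
    unfolding frac_kernel_def
    using integral_reflect_Icc0[where f="\<lambda>\<sigma>. \<sigma> powr (-\<epsilon>) * \<kappa> (r - \<sigma>)" and r=r] by simp
  also have "integral {0..r} (\<lambda>s. (r - s) powr (-\<epsilon>) * conv_deriv s) = frac_conv_deriv r"
    unfolding frac_conv_deriv_def
    using integral_reflect_Icc0[where f="\<lambda>\<sigma>. \<sigma> powr (-\<epsilon>) * conv_deriv (r - \<sigma>)" and r=r] by simp
  finally show ?thesis by (simp add: algebra_simps)
qed

lemma weighted_abs_deriv_integrable:
  "0 \<le> t \<Longrightarrow> t \<le> T \<Longrightarrow> (\<lambda>u. (t - u) powr (-\<epsilon>) * \<bar>\<phi> u\<bar>) integrable_on {0..t}"
  using eps_nonneg eps_lt_1
  by (intro integrable_reflect_powr_neg_mult continuous_intros continuous_on_subset[OF deriv_cont]) auto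

lemma weighted_abs_deriv_reflect:
  "weighted_abs_deriv t = integral {0..t} (\<lambda>\<sigma>. \<sigma> powr (-\<epsilon>) * \<bar>\<phi> (t - \<sigma>)\<bar>)"
  unfolding weighted_abs_deriv_def
  using integral_reflect_Icc0[where f="\<lambda>\<sigma>. \<sigma> powr (-\<epsilon>) * \<bar>\<phi> (t - \<sigma>)\<bar>" and r=t] by simp

lemma weighted_abs_deriv_nonneg: "0 \<le> t \<Longrightarrow> t \<le> T \<Longrightarrow> 0 \<le> weighted_abs_deriv t"
  unfolding weighted_abs_deriv_def by (rule integral_nonneg[OF weighted_abs_deriv_integrable]) auto

text \<open>Tonelli: integrating first in \<open>\<sigma>\<close> produces the Beta-type factor of \<open>nn_integral_beta_le\<close>.\<close>

lemma nn_integral_abel_half_mass_le: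
  assumes y: "0 \<le> y" "y < t" "t \<le> T"
  shows "(\<integral>\<^sup>+\<sigma>. ennreal (indicator {0..y} \<sigma> * \<sigma> powr (-\<epsilon>)) * abel_half_mass (y - \<sigma>) \<partial>lborel)
    \<le> ennreal (8 * sqrt T * weighted_abs_deriv t)"
proof -
  define F where "F \<sigma> u = ennreal (indicator {0..y} \<sigma> * \<sigma> powr (-\<epsilon>)
    * ((if 0 \<le> u \<and> u \<le> y - \<sigma> then 1 else 0) * (y - \<sigma> - u) powr (-1/2) * \<bar>deriv_ext u\<bar>))" for \<sigma> u
  have Fm: "case_prod F \<in> borel_measurable (lborel \<Otimes>\<^sub>M lborel)"
  proof -
    have "case_prod F \<in> borel_measurable (borel \<Otimes>\<^sub>M borel)"
      unfolding F_def by measurable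
    then show ?thesis
      by (subst measurable_cong_sets[OF sets_pair_measure_cong[OF sets_lborel sets_lborel] refl])
  qed
  have "(\<integral>\<^sup>+\<sigma>. ennreal (indicator {0..y} \<sigma> * \<sigma> powr (-\<epsilon>)) * abel_half_mass (y - \<sigma>) \<partial>lborel)
      = (\<integral>\<^sup>+\<sigma>. (\<integral>\<^sup>+u. F \<sigma> u \<partial>lborel) \<partial>lborel)"
  proof (rule nn_integral_cong)
    fix \<sigma> :: real
    have "ennreal (indicator {0..y} \<sigma> * \<sigma> powr (-\<epsilon>)) * abel_half_mass (y - \<sigma>) =
       (\<integral>\<^sup>+u. ennreal (indicator {0..y} \<sigma> * \<sigma> powr (-\<epsilon>))
         * ennreal (indicator {0..y-\<sigma>} u * (y - \<sigma> - u) powr (-1/2) * \<bar>deriv_ext u\<bar>) \<partial>lborel)"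
      unfolding abel_half_mass_def by (rule nn_integral_cmult[symmetric]) measurable
    also have "\<dots> = (\<integral>\<^sup>+u. F \<sigma> u \<partial>lborel)"
      unfolding F_def by (intro nn_integral_cong) (simp add: ennreal_mult'[symmetric] mult.assoc indicator_def)
    finally show "ennreal (indicator {0..y} \<sigma> * \<sigma> powr (-\<epsilon>)) * abel_half_mass (y - \<sigma>)
        = (\<integral>\<^sup>+u. F \<sigma> u \<partial>lborel)" .
  qed
  also have "\<dots> = (\<integral>\<^sup>+u. (\<integral>\<^sup>+\<sigma>. F \<sigma> u \<partial>lborel) \<partial>lborel)"
    by (rule lborel_pair.Fubini'[OF Fm, symmetric])
  also have "\<dots> \<le> (\<integral>\<^sup>+u. ennreal (indicator {0..t} u * (8 * sqrt T * ((t - u) powr (-\<epsilon>) * \<bar>\<phi> u\<bar>))) \<partial>lborel)"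
  proof (rule nn_integral_mono)
    fix u :: real
    show "(\<integral>\<^sup>+\<sigma>. F \<sigma> u \<partial>lborel) \<le> ennreal (indicator {0..t} u * (8 * sqrt T * ((t - u) powr (-\<epsilon>) * \<bar>\<phi> u\<bar>)))"
    proof (cases "u \<in> {0..y}")
      case True
      then have u: "0 \<le> u" "u \<le> y" by auto
      have "(\<integral>\<^sup>+\<sigma>. F \<sigma> u \<partial>lborel) = (\<integral>\<^sup>+\<sigma>. ennreal \<bar>deriv_ext u\<bar>
          * ennreal (indicator {0..y-u} \<sigma> * (\<sigma> powr (-\<epsilon>) * (y - u - \<sigma>) powr (-1/2))) \<partial>lborel)"
        unfolding F_def using True
        by (intro nn_integral_cong) (auto simp: indicator_def ennreal_mult'[symmetric] algebra_simps)
      also have "\<dots> = ennreal \<bar>deriv_ext u\<bar>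
          * (\<integral>\<^sup>+\<sigma>. ennreal (indicator {0..y-u} \<sigma> * (\<sigma> powr (-\<epsilon>) * (y - u - \<sigma>) powr (-1/2))) \<partial>lborel)"
        by (rule nn_integral_cmult) measurable
      also have "\<dots> \<le> ennreal \<bar>deriv_ext u\<bar> * ennreal (8 * sqrt T * (t - u) powr (-\<epsilon>))"
        using nn_integral_beta_le[of "y - u" "t - u"] u y by (intro mult_left_mono) auto
      also have "\<dots> = ennreal (indicator {0..t} u * (8 * sqrt T * ((t - u) powr (-\<epsilon>) * \<bar>\<phi> u\<bar>)))"
        using deriv_ext_eq[of u] u y by (simp add: ennreal_mult'[symmetric] mult_ac)
      finally show ?thesis .
    next
      case False
      then have "F \<sigma> u = 0" for \<sigma> unfolding F_def by (auto simp: indicator_def)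
      then show ?thesis by simp
    qed
  qed
  also have "\<dots> = ennreal (8 * sqrt T * weighted_abs_deriv t)"
  proof -
    have "((\<lambda>u. 8 * sqrt T * ((t - u) powr (-\<epsilon>) * \<bar>\<phi> u\<bar>)) has_integral (8 * sqrt T * weighted_abs_deriv t)) {0..t}"
      unfolding weighted_abs_deriv_def using weighted_abs_deriv_integrable[of t] y
      by (intro has_integral_mult_right) (auto simp: has_integral_integral)
    then show ?thesis using T_pos by (intro nn_integral_has_integral_lebesgue) auto
  qed
  finally show ?thesis .
qed

lemma nn_integral_weighted_deriv_le:
  assumes y: "0 < y" "y < t" "t \<le> T" and e: "0 \<le> e" and c: "0 \<le> c"
  shows "(\<integral>\<^sup>+\<sigma>. ennreal (indicator {0..y} \<sigma> * (\<sigma> powr (-\<epsilon>) * (c * (\<bar>deriv_ext (t - \<sigma>)\<bar> + e)))) \<partial>lborel)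
    \<le> ennreal (c * (weighted_abs_deriv t + e * (T powr (1 - \<epsilon>) / (1 - \<epsilon>))))"
proof -
  define g where "g \<sigma> = \<sigma> powr (-\<epsilon>) * (c * (\<bar>\<phi> (t - \<sigma>)\<bar> + e))" for \<sigma>
  have ct: "continuous_on {0..t} (\<lambda>\<sigma>. \<bar>\<phi> (t - \<sigma>)\<bar>)"
    by (intro continuous_intros continuous_on_reflect[OF deriv_cont]) (use y in auto)
  have i1: "(\<lambda>\<sigma>. \<sigma> powr (-\<epsilon>) * \<bar>\<phi> (t - \<sigma>)\<bar>) integrable_on {0..t}"
    using y eps_nonneg eps_lt_1 by (intro integrable_powr_neg_mult ct) auto
  then have i1y: "(\<lambda>\<sigma>. \<sigma> powr (-\<epsilon>) * \<bar>\<phi> (t - \<sigma>)\<bar>) integrable_on {0..y}"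
    using y by (auto intro: integrable_subinterval_real)
  have i2: "((\<lambda>\<sigma>. \<sigma> powr (-\<epsilon>)) has_integral y powr (1 - \<epsilon>) / (1 - \<epsilon>)) {0..y}"
    using has_integral_powr_neg[OF eps_nonneg eps_lt_1] y by simp
  have g: "(g has_integral c * (integral {0..y} (\<lambda>\<sigma>. \<sigma> powr (-\<epsilon>) * \<bar>\<phi> (t - \<sigma>)\<bar>)
      + e * (y powr (1 - \<epsilon>) / (1 - \<epsilon>)))) {0..y}"
    unfolding g_def distrib_left
    using has_integral_add[OF has_integral_mult_right[OF integrable_integral[OF i1y], of c]
        has_integral_mult_right[OF i2, of "c * e"]]
    by (simp add: algebra_simps)
  have "(\<integral>\<^sup>+\<sigma>. ennreal (indicator {0..y} \<sigma> * (\<sigma> powr (-\<epsilon>) * (c * (\<bar>deriv_ext (t - \<sigma>)\<bar> + e)))) \<partial>lborel)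
      = (\<integral>\<^sup>+\<sigma>. ennreal (indicator {0..y} \<sigma> * g \<sigma>) \<partial>lborel)"
    unfolding g_def using y by (intro nn_integral_cong) (auto simp: indicator_def deriv_ext_eq)
  also have "\<dots> = ennreal (c * (integral {0..y} (\<lambda>\<sigma>. \<sigma> powr (-\<epsilon>) * \<bar>\<phi> (t - \<sigma>)\<bar>)
      + e * (y powr (1 - \<epsilon>) / (1 - \<epsilon>))))"
    by (rule nn_integral_has_integral_lebesgue[OF _ g]) (use c e in \<open>auto simp: g_def\<close>)
  also have "\<dots> \<le> ennreal (c * (weighted_abs_deriv t + e * (T powr (1 - \<epsilon>) / (1 - \<epsilon>))))"
  proof (intro ennreal_leI mult_left_mono[OF add_mono] c)
    show "integral {0..y} (\<lambda>\<sigma>. \<sigma> powr (-\<epsilon>) * \<bar>\<phi> (t - \<sigma>)\<bar>) \<le> weighted_abs_deriv t"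
      unfolding weighted_abs_deriv_reflect using i1y i1 y by (intro integral_subset_le) auto
    have "y powr (1 - \<epsilon>) \<le> T powr (1 - \<epsilon>)" using y eps_lt_1 by (intro powr_mono2) auto
    then show "e * (y powr (1 - \<epsilon>) / (1 - \<epsilon>)) \<le> e * (T powr (1 - \<epsilon>) / (1 - \<epsilon>))"
      using e eps_lt_1 by (intro mult_left_mono divide_right_mono) auto
  qed
  finally show ?thesis .
qed
lemma frac_conv_deriv_inner_increment:
  assumes h: "0 < h" "h < t" "t \<le> T"
    and e: "\<And>u v. u \<in> {0..T} \<Longrightarrow> v \<in> {0..T} \<Longrightarrow> \<bar>u - v\<bar> \<le> h \<Longrightarrow> \<bar>\<phi> u - \<phi> v\<bar> \<le> e"
  shows "\<bar>integral {0..t-h} (\<lambda>\<sigma>. \<sigma> powr (-\<epsilon>) * (conv_deriv (t - \<sigma>) - conv_deriv (t - h - \<sigma>)))\<bar>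
    \<le> Mk * h * (weighted_abs_deriv t + e * (T powr (1 - \<epsilon>) / (1 - \<epsilon>)))
      + Ck * h * (8 * sqrt T * weighted_abs_deriv t)"
proof -
  define y where "y = t - h"
  have y: "0 < y" "y < t" using h by (auto simp: y_def)
  have e0: "0 \<le> e" using e[of 0 0] T_pos h by auto
  have "ennreal \<bar>integral {0..y} (\<lambda>\<sigma>. \<sigma> powr (-\<epsilon>) * (conv_deriv (t - \<sigma>) - conv_deriv (y - \<sigma>)))\<bar>
      \<le> (\<integral>\<^sup>+\<sigma>. ennreal (indicator {0..y} \<sigma> * \<bar>\<sigma> powr (-\<epsilon>) * (conv_deriv (t - \<sigma>) - conv_deriv (y - \<sigma>))\<bar>) \<partial>lborel)"
    using y h eps_nonneg eps_lt_1
    by (intro abs_integral_le_nn_integral absolutely_integrable_powr_neg_mult continuous_intros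
        continuous_on_reflect[OF continuous_on_conv_deriv]) auto
  also have "\<dots> \<le> (\<integral>\<^sup>+\<sigma>. ennreal (indicator {0..y} \<sigma> * (\<sigma> powr (-\<epsilon>) * (Mk * h * (\<bar>deriv_ext (t - \<sigma>)\<bar> + e))))
      + ennreal (Ck * h) * (ennreal (indicator {0..y} \<sigma> * \<sigma> powr (-\<epsilon>)) * abel_half_mass (y - \<sigma>)) \<partial>lborel)"
  proof (rule nn_integral_mono)
    fix \<sigma> :: real
    show "ennreal (indicator {0..y} \<sigma> * \<bar>\<sigma> powr (-\<epsilon>) * (conv_deriv (t - \<sigma>) - conv_deriv (y - \<sigma>))\<bar>)
       \<le> ennreal (indicator {0..y} \<sigma> * (\<sigma> powr (-\<epsilon>) * (Mk * h * (\<bar>deriv_ext (t - \<sigma>)\<bar> + e))))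
          + ennreal (Ck * h) * (ennreal (indicator {0..y} \<sigma> * \<sigma> powr (-\<epsilon>)) * abel_half_mass (y - \<sigma>))"
    proof (cases "\<sigma> \<in> {0..y}")
      case True
      have x: "h \<le> t - \<sigma>" "t - \<sigma> \<le> T" using True h by (auto simp: y_def)
      have d: "ennreal \<bar>conv_deriv (t - \<sigma>) - conv_deriv (y - \<sigma>)\<bar>
          \<le> ennreal (Mk * h * (\<bar>deriv_ext (t - \<sigma>)\<bar> + e)) + ennreal (Ck * h) * abel_half_mass (y - \<sigma>)"
        using conv_deriv_increment_nn[OF h(1) x e] deriv_ext_eq[of "t - \<sigma>"] x h
        by (simp add: y_def algebra_simps)
      have "ennreal (indicator {0..y} \<sigma> * \<bar>\<sigma> powr (-\<epsilon>) * (conv_deriv (t - \<sigma>) - conv_deriv (y - \<sigma>))\<bar>)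
          = ennreal (\<sigma> powr (-\<epsilon>)) * ennreal \<bar>conv_deriv (t - \<sigma>) - conv_deriv (y - \<sigma>)\<bar>"
        using True by (simp add: abs_mult ennreal_mult)
      also have "\<dots> \<le> ennreal (\<sigma> powr (-\<epsilon>))
          * (ennreal (Mk * h * (\<bar>deriv_ext (t - \<sigma>)\<bar> + e)) + ennreal (Ck * h) * abel_half_mass (y - \<sigma>))"
        by (rule mult_left_mono[OF d]) simp
      also have "\<dots> = ennreal (indicator {0..y} \<sigma> * (\<sigma> powr (-\<epsilon>) * (Mk * h * (\<bar>deriv_ext (t - \<sigma>)\<bar> + e))))
          + ennreal (Ck * h) * (ennreal (indicator {0..y} \<sigma> * \<sigma> powr (-\<epsilon>)) * abel_half_mass (y - \<sigma>))"
        using True Mk_nonneg h e0 by (simp add: distrib_left ennreal_mult mult_ac)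
      finally show ?thesis .
    qed simp
  qed
  also have "\<dots> = (\<integral>\<^sup>+\<sigma>. ennreal (indicator {0..y} \<sigma> * (\<sigma> powr (-\<epsilon>) * (Mk * h * (\<bar>deriv_ext (t - \<sigma>)\<bar> + e)))) \<partial>lborel)
      + ennreal (Ck * h) * (\<integral>\<^sup>+\<sigma>. ennreal (indicator {0..y} \<sigma> * \<sigma> powr (-\<epsilon>)) * abel_half_mass (y - \<sigma>) \<partial>lborel)"
    by (subst nn_integral_add) (auto simp: nn_integral_cmult)
  also have "\<dots> \<le> ennreal (Mk * h * (weighted_abs_deriv t + e * (T powr (1 - \<epsilon>) / (1 - \<epsilon>))))
      + ennreal (Ck * h) * ennreal (8 * sqrt T * weighted_abs_deriv t)"
    using nn_integral_weighted_deriv_le[OF y h(3) e0, of "Mk * h"] nn_integral_abel_half_mass_le[of y t] y h Mk_nonneg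
    by (intro add_mono mult_left_mono) auto
  also have "\<dots> = ennreal (Mk * h * (weighted_abs_deriv t + e * (T powr (1 - \<epsilon>) / (1 - \<epsilon>)))
      + Ck * h * (8 * sqrt T * weighted_abs_deriv t))"
    using weighted_abs_deriv_nonneg[of t] h Ck_nonneg Mk_nonneg e0 eps_lt_1
    by (simp add: ennreal_plus[symmetric] ennreal_mult[symmetric] del: ennreal_plus)
  finally show ?thesis
    using weighted_abs_deriv_nonneg[of t] h Ck_nonneg Mk_nonneg e0 eps_lt_1 unfolding y_def
    by (subst (asm) ennreal_le_iff) (auto intro!: add_nonneg_nonneg mult_nonneg_nonneg)
qed

text \<open>The new piece \<open>\<integral>\<^sub>t\<^sub>-\<^sub>h\<^sup>t\<close> is \<open>O(h\<^sup>2)\<close> since \<open>conv_deriv\<close> vanishes linearly at 0; the inner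
  increment is split by \<open>conv_deriv_increment_nn\<close> into a local term and the kernel-increment term.\<close>

lemma frac_conv_deriv_increment:
  assumes h: "0 < h" "h < t" "t \<le> T"
    and Mp: "\<And>s. s \<in> {0..T} \<Longrightarrow> \<bar>\<phi> s\<bar> \<le> Mp" "0 \<le> Mp"
    and e: "\<And>u v. u \<in> {0..T} \<Longrightarrow> v \<in> {0..T} \<Longrightarrow> \<bar>u - v\<bar> \<le> h \<Longrightarrow> \<bar>\<phi> u - \<phi> v\<bar> \<le> e"
  shows "\<bar>frac_conv_deriv t - frac_conv_deriv (t - h)\<bar> \<le> Mk * Mp * h * h * (t - h) powr (-\<epsilon>)
     + h * (Mk * (weighted_abs_deriv t + e * (T powr (1 - \<epsilon>) / (1 - \<epsilon>))) + 8 * Ck * sqrt T * weighted_abs_deriv t)"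
proof -
  define y where "y = t - h"
  have y: "0 < y" "y < t" using h by (auto simp: y_def)
  define f where "f \<sigma> = \<sigma> powr (-\<epsilon>) * conv_deriv (t - \<sigma>)" for \<sigma>
  have fi: "f integrable_on {0..t}"
    unfolding f_def using h eps_nonneg eps_lt_1
    by (intro integrable_powr_neg_mult continuous_on_reflect[OF continuous_on_conv_deriv]) auto
  then have fia: "f integrable_on {0..y}" using y by (auto intro: integrable_subinterval_real)
  have gi: "(\<lambda>\<sigma>. \<sigma> powr (-\<epsilon>) * conv_deriv (y - \<sigma>)) integrable_on {0..y}"
    using y h eps_nonneg eps_lt_1
    by (intro integrable_powr_neg_mult continuous_on_reflect[OF continuous_on_conv_deriv]) auto
  have "frac_conv_deriv t - frac_conv_deriv y = integral {y..t} f
      + integral {0..y} (\<lambda>\<sigma>. \<sigma> powr (-\<epsilon>) * (conv_deriv (t - \<sigma>) - conv_deriv (y - \<sigma>)))"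
    using Henstock_Kurzweil_Integration.integral_combine[OF _ _ fi, of y] y integral_diff[OF fia[unfolded f_def] gi]
    unfolding frac_conv_deriv_def f_def by (simp add: algebra_simps)
  moreover have "\<bar>integral {y..t} f\<bar> \<le> (Mk * Mp * h * y powr (-\<epsilon>)) * (t - y)"
  proof (rule integral_abs_le_const)
    fix \<sigma> assume s: "\<sigma> \<in> {y..t}"
    have "\<bar>conv_deriv (t - \<sigma>)\<bar> \<le> Mk * Mp * (t - \<sigma>)" using conv_deriv_abs_le[OF Mp(1)] s y h by auto
    also have "\<dots> \<le> Mk * Mp * h" using s Mk_nonneg Mp(2) by (intro mult_left_mono) (auto simp: y_def)
    finally have "\<sigma> powr (-\<epsilon>) * \<bar>conv_deriv (t - \<sigma>)\<bar> \<le> y powr (-\<epsilon>) * (Mk * Mp * h)"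
      using s y eps_nonneg by (intro mult_mono powr_mono2') auto
    then show "\<bar>f \<sigma>\<bar> \<le> Mk * Mp * h * y powr (-\<epsilon>)" unfolding f_def by (simp add: abs_mult mult_ac)
  qed (use fi y Mk_nonneg Mp h in \<open>auto intro: integrable_subinterval_real\<close>)
  moreover note frac_conv_deriv_inner_increment[OF h e]
  ultimately show ?thesis unfolding y_def by (simp add: algebra_simps)
qed

lemma frac_kernel_quotient_eventually:
  assumes t: "0 < t" "t \<le> T" and e: "0 < e"
  shows "eventually (\<lambda>h. \<bar>frac_kernel t - frac_kernel (t - h)\<bar> / h
    \<le> (Mk + 8 * Ck * sqrt T) * t powr (-\<epsilon>) + e * (Mk + 8 * Ck * sqrt T)) (at_right 0)"
proof -
  have "((\<lambda>h. (t - h) powr (-\<epsilon>)) \<longlongrightarrow> t powr (-\<epsilon>)) (at_right 0)"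
    using t by (intro tendsto_eq_intros) auto
  then have "eventually (\<lambda>h. (t - h) powr (-\<epsilon>) \<le> t powr (-\<epsilon>) + e) (at_right 0)"
    using e by (auto dest!: tendstoD[of _ _ _ e] elim!: eventually_mono simp: dist_real_def)
  moreover have "eventually (\<lambda>h. 0 < h \<and> h < t) (at_right (0::real))"
    using t by (auto simp: eventually_at_right[of 0] intro!: exI[of _ t])
  ultimately show ?thesis
  proof eventually_elim
    case (elim h)
    have C: "0 \<le> Mk + 8 * Ck * sqrt T" using Mk_nonneg Ck_nonneg T_pos by simp
    have "\<bar>frac_kernel t - frac_kernel (t - h)\<bar> \<le> (Mk + 8 * Ck * sqrt T) * h * (t - h) powr (-\<epsilon>)"
      using frac_kernel_increment[of "t - h" t] elim t by auto
    also have "\<dots> \<le> (Mk + 8 * Ck * sqrt T) * h * (t powr (-\<epsilon>) + e)"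
      using elim C by (intro mult_left_mono) auto
    finally show ?case using elim by (simp add: divide_le_eq algebra_simps)
  qed
qed

lemma frac_conv_deriv_quotient_eventually:
  assumes t: "0 < t" "t \<le> T" and e: "0 < e"
  shows "eventually (\<lambda>h. \<bar>frac_conv_deriv t - frac_conv_deriv (t - h)\<bar> / h
    \<le> (Mk + 8 * Ck * sqrt T) * weighted_abs_deriv t + e * (1 + Mk * (T powr (1 - \<epsilon>) / (1 - \<epsilon>)))) (at_right 0)"
proof -
  obtain Mp where Mp: "0 \<le> Mp" "\<And>s. s \<in> {0..T} \<Longrightarrow> \<bar>\<phi> s\<bar> \<le> Mp" using deriv_bounded by blast
  have "uniformly_continuous_on {0..T} \<phi>" by (rule compact_uniformly_continuous[OF deriv_cont compact_Icc])
  then obtain d where d: "d > 0"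
    "\<And>x y. x \<in> {0..T} \<Longrightarrow> y \<in> {0..T} \<Longrightarrow> dist y x < d \<Longrightarrow> dist (\<phi> y) (\<phi> x) < e"
    unfolding uniformly_continuous_on_def using e by metis
  define KK where "KK = Mk * Mp * (t/2) powr (-\<epsilon>)"
  have KK: "0 \<le> KK" using Mk_nonneg Mp by (simp add: KK_def)
  define d' where "d' = min (t/2) (min d (e / (KK + 1)))"
  have "0 < d'" using t d e KK by (simp add: d'_def add_nonneg_pos)
  then have "eventually (\<lambda>h. 0 < h \<and> h < d') (at_right (0::real))"
    by (auto simp: eventually_at_right[of 0] intro!: exI[of _ d'])
  then show ?thesis
  proof eventually_elim
    case (elim h)
    then have h: "0 < h" "h < t/2" "h < d" "h < e / (KK + 1)" by (auto simp: d'_def)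
    have "\<bar>\<phi> u - \<phi> v\<bar> \<le> e" if "u \<in> {0..T}" "v \<in> {0..T}" "\<bar>u - v\<bar> \<le> h" for u v
      using d(2)[of v u] that h by (auto simp: dist_real_def)
    then have S: "\<bar>frac_conv_deriv t - frac_conv_deriv (t - h)\<bar> \<le> Mk * Mp * h * h * (t - h) powr (-\<epsilon>)
        + h * (Mk * (weighted_abs_deriv t + e * (T powr (1 - \<epsilon>) / (1 - \<epsilon>))) + 8 * Ck * sqrt T * weighted_abs_deriv t)"
      using frac_conv_deriv_increment[of h t Mp e] h t Mp by auto
    have "Mk * Mp * (t - h) powr (-\<epsilon>) \<le> KK"
      unfolding KK_def using h Mk_nonneg Mp eps_nonneg by (intro mult_left_mono powr_mono2') auto
    then have "Mk * Mp * h * (t - h) powr (-\<epsilon>) \<le> h * KK"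
      using h by (simp add: mult_ac mult_left_mono)
    also have "\<dots> \<le> e" using h KK by (simp add: field_simps)
    finally have "Mk * Mp * h * h * (t - h) powr (-\<epsilon>) \<le> e * h"
      using h by (simp add: mult_right_mono mult_ac)
    with S have "\<bar>frac_conv_deriv t - frac_conv_deriv (t - h)\<bar>
        \<le> h * ((Mk + 8 * Ck * sqrt T) * weighted_abs_deriv t + e * (1 + Mk * (T powr (1 - \<epsilon>) / (1 - \<epsilon>))))"
      by (simp add: algebra_simps)
    then show ?case using h by (simp add: divide_le_eq mult_ac)
  qed
qed

lemma frac_integral_deriv_bound:
  fixes K D1 :: "real \<Rightarrow> real" and \<zeta> c D2 t :: real
  assumes t: "0 < t" "t \<le> T" and c: "0 \<le> c" and \<zeta>: "0 \<le> \<zeta>"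
    and K: "\<And>s. 0 < s \<Longrightarrow> s \<le> T \<Longrightarrow> K s = \<kappa> s"
    and D1: "\<And>s. s \<in> {0<..T} \<Longrightarrow>
      ((\<lambda>r. \<zeta> * integral {0..r} (\<lambda>s. K (r - s) * w s)) has_real_derivative D1 s) (at s within {0..T})"
    and D2: "((\<lambda>r. c * integral {0..r} (\<lambda>s. (r - s) powr (-\<epsilon>) * D1 s)) has_real_derivative D2) (at t within {0..T})"
  shows "\<bar>D2\<bar> \<le> c * \<zeta> * (Mk + 8 * Ck * sqrt T) * (weighted_abs_deriv t + \<bar>w 0\<bar> * t powr (-\<epsilon>))"
proof -
  define C where "C = Mk + 8 * Ck * sqrt T"
  define F where "F r = c * integral {0..r} (\<lambda>s. (r - s) powr (-\<epsilon>) * D1 s)" for r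
  have F: "F r = c * (\<zeta> * (w 0 * frac_kernel r + frac_conv_deriv r))" if "0 < r" "r \<le> T" for r
    unfolding F_def using that conv_deriv_formula[OF _ _ K D1] by (subst frac_integral_formula) auto
  have quot: "eventually (\<lambda>h. (F t - F (t - h)) / h = c * \<zeta> * (w 0 * ((frac_kernel t - frac_kernel (t - h)) / h)
      + (frac_conv_deriv t - frac_conv_deriv (t - h)) / h)) (at_right 0)"
  proof -
    have "eventually (\<lambda>h. 0 < h \<and> h < t) (at_right (0::real))"
      using t by (auto simp: eventually_at_right[of 0] intro!: exI[of _ t])
    then show ?thesis
    proof eventually_elim
      case (elim h)
      then show ?case using t by (simp add: F diff_divide_distrib add_divide_distrib algebra_simps)
    qed
  qed
  show ?thesis
  proof (fold C_def, rule abs_le_of_tendsto_eventually_le)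
    show "((\<lambda>h. (F t - F (t - h)) / h) \<longlongrightarrow> D2) (at_right 0)"
      using has_real_derivative_left_quotient[OF D2[folded F_def] t] .
    show "0 \<le> c * \<zeta> * (\<bar>w 0\<bar> * C + 1 + Mk * (T powr (1 - \<epsilon>) / (1 - \<epsilon>)))"
    proof -
      have "0 \<le> C" "0 \<le> Mk * (T powr (1 - \<epsilon>) / (1 - \<epsilon>))"
        using Mk_nonneg Ck_nonneg T_pos eps_lt_1 by (simp_all add: C_def)
      then show ?thesis using c \<zeta> by simp
    qed
    fix e :: real assume e: "0 < e"
    from quot frac_kernel_quotient_eventually[OF t e] frac_conv_deriv_quotient_eventually[OF t e]
      eventually_at_right_less
    show "eventually (\<lambda>h. \<bar>(F t - F (t - h)) / h\<bar> \<le> c * \<zeta> * C * (weighted_abs_deriv t + \<bar>w 0\<bar> * t powr (-\<epsilon>))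
        + e * (c * \<zeta> * (\<bar>w 0\<bar> * C + 1 + Mk * (T powr (1 - \<epsilon>) / (1 - \<epsilon>))))) (at_right 0)"
    proof eventually_elim
      case (elim h)
      have "\<bar>w 0 * ((frac_kernel t - frac_kernel (t - h)) / h) + (frac_conv_deriv t - frac_conv_deriv (t - h)) / h\<bar>
          \<le> \<bar>w 0\<bar> * (\<bar>frac_kernel t - frac_kernel (t - h)\<bar> / h) + \<bar>frac_conv_deriv t - frac_conv_deriv (t - h)\<bar> / h"
        using abs_triangle_ineq[of "w 0 * ((frac_kernel t - frac_kernel (t - h)) / h)"
            "(frac_conv_deriv t - frac_conv_deriv (t - h)) / h"] elim(4)
        by (simp add: abs_mult)
      also have "\<dots> \<le> \<bar>w 0\<bar> * (C * t powr (-\<epsilon>) + e * C)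
          + (C * weighted_abs_deriv t + e * (1 + Mk * (T powr (1 - \<epsilon>) / (1 - \<epsilon>))))"
        using elim unfolding C_def by (intro add_mono mult_left_mono) auto
      finally have "\<bar>(F t - F (t - h)) / h\<bar> \<le> c * \<zeta> * (\<bar>w 0\<bar> * (C * t powr (-\<epsilon>) + e * C)
          + (C * weighted_abs_deriv t + e * (1 + Mk * (T powr (1 - \<epsilon>) / (1 - \<epsilon>)))))"
        using elim(1) c \<zeta> by (simp add: abs_mult mult_left_mono)
      then show ?case by (simp add: algebra_simps)
    qed
  qed
qed

end

lemma (in variable_order) kconv_frac_deriv_bound:
  assumes \<zeta>: "0 < \<zeta>" and \<epsilon>: "0 \<le> \<epsilon>" "\<epsilon> \<le> 1/4"
    and Mk: "\<And>s. s \<in> {0..T} \<Longrightarrow> \<bar>vo_kernel_ext \<alpha> s\<bar> \<le> Mk"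
    and Ck: "0 \<le> Ck" "\<And>x y. 0 < y \<Longrightarrow> y \<le> x \<Longrightarrow> x \<le> T \<Longrightarrow>
      \<bar>vo_kernel_ext \<alpha> x - vo_kernel_ext \<alpha> y\<bar> \<le> Ck * (x - y) * y powr (-1/2)"
    and dw: "continuous_on {0..T} dw"
    and w: "\<forall>s\<in>{0..T}. (w has_real_derivative dw s) (at s within {0..T})"
    and D1: "\<forall>s\<in>{0<..T}. ((\<lambda>r. \<zeta> * kconv \<alpha> w r) has_real_derivative D1 s) (at s within {0..T})"
    and t: "t \<in> {0<..T}"
    and D2: "(RL_int (1 - \<epsilon>) D1 has_real_derivative D2) (at t within {0..T})"
  shows "\<bar>D2\<bar> \<le> \<zeta> / Gamma (1 - \<epsilon>) * (Mk + 8 * Ck * sqrt T) * integral {0..t} (\<lambda>s. \<bar>dw s\<bar> / (t - s) powr \<epsilon>)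
    + \<zeta> / Gamma (1 - \<epsilon>) * (Mk + 8 * Ck * sqrt T) * \<bar>w 0\<bar> / t powr \<epsilon>"
proof -
  interpret frac_kernel_conv T Mk Ck "vo_kernel_ext \<alpha>" w dw \<epsilon>
    by unfold_locales (use T_pos vo_kernel_ext_continuous_on Mk Ck dw w \<epsilon> in auto)
  have "((\<lambda>r. 1 / Gamma (1 - \<epsilon>) * integral {0..r} (\<lambda>s. (r - s) powr (-\<epsilon>) * D1 s))
      has_real_derivative D2) (at t within {0..T})"
    using D2 by (simp add: RL_int_def[abs_def])
  then have "\<bar>D2\<bar> \<le> 1 / Gamma (1 - \<epsilon>) * \<zeta> * (Mk + 8 * Ck * sqrt T)
      * (weighted_abs_deriv t + \<bar>w 0\<bar> * t powr (-\<epsilon>))"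
    using \<zeta> \<epsilon> D1 t vo_kernel_eq_ext[of _ \<alpha>] Gamma_real_pos[of "1 - \<epsilon>"]
    by (intro frac_integral_deriv_bound[where K="vo_kernel \<alpha>"]) (auto simp: kconv_def)
  moreover have "weighted_abs_deriv t = integral {0..t} (\<lambda>s. \<bar>dw s\<bar> / (t - s) powr \<epsilon>)"
    unfolding weighted_abs_deriv_def by (simp add: powr_minus_divide)
  moreover have "1 / Gamma (1 - \<epsilon>) * \<zeta> * C * (W + \<bar>w 0\<bar> * t powr (-\<epsilon>))
      = \<zeta> / Gamma (1 - \<epsilon>) * C * W + \<zeta> / Gamma (1 - \<epsilon>) * C * \<bar>w 0\<bar> / t powr \<epsilon>" for C W
    by (simp add: powr_minus_divide ring_distribs divide_inverse mult_ac)
  ultimately show ?thesis by simp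
qed

theorem lemma3p3:
  fixes \<alpha> \<alpha>1 \<alpha>2 :: "real \<Rightarrow> real" and T \<zeta> :: real
  assumes T_pos: "T > 0" and zeta_pos: "\<zeta> > 0"
    and alpha_bounds: "\<exists>\<alpha>s>0. \<forall>t\<in>{0..T}. \<alpha>s \<le> \<alpha> t \<and> \<alpha> t \<le> 1"
    and alpha0: "\<alpha> 0 = 1"
    and d1: "\<forall>t\<in>{0..T}. (\<alpha> has_real_derivative \<alpha>1 t) (at t within {0..T})"
    and d2: "\<forall>t\<in>{0..T}. (\<alpha>1 has_real_derivative \<alpha>2 t) (at t within {0..T})"
    and d3: "\<exists>L. \<forall>s\<in>{0..T}. \<forall>t\<in>{0..T}. \<bar>\<alpha>2 s - \<alpha>2 t\<bar> \<le> L * \<bar>s - t\<bar>"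
  shows "\<exists>\<epsilon>0>0. \<forall>\<epsilon>. 0 \<le> \<epsilon> \<and> \<epsilon> \<le> \<epsilon>0 \<longrightarrow>
    (\<exists>Q. \<forall>(\<Omega>::(real^'n) set) (v::real^'n \<Rightarrow> real \<Rightarrow> real) x dw D1 D2 t.
       open \<Omega> \<and> bounded \<Omega> \<and> CARD('n) \<le> 3 \<and> x \<in> \<Omega>
       \<and> continuous_on {0..T} dw
       \<and> (\<forall>s\<in>{0..T}. ((\<lambda>r. laplacian (\<lambda>y. v y r) x) has_real_derivative dw s) (at s within {0..T}))
       \<and> (\<forall>s\<in>{0<..T}. ((\<lambda>r. \<zeta> * kconv \<alpha> (\<lambda>\<tau>. laplacian (\<lambda>y. v y \<tau>) x) r)
                             has_real_derivative D1 s) (at s within {0..T}))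
       \<and> t \<in> {0<..T}
       \<and> (RL_int (1 - \<epsilon>) D1 has_real_derivative D2) (at t within {0..T})
       \<longrightarrow> \<bar>D2\<bar> \<le> Q * integral {0..t} (\<lambda>s. \<bar>dw s\<bar> / (t - s) powr \<epsilon>)
                 + Q * \<bar>laplacian (\<lambda>y. v y 0) x\<bar> / t powr \<epsilon>)"
proof -
  obtain \<alpha>s where \<alpha>s: "0 < \<alpha>s" "\<forall>t\<in>{0..T}. \<alpha>s \<le> \<alpha> t \<and> \<alpha> t \<le> 1"
    using alpha_bounds by blast
  have "continuous_on {0..T} \<alpha>1"
    using d2 by (meson DERIV_continuous continuous_on_eq_continuous_within)
  then interpret variable_order T \<alpha>s \<alpha> \<alpha>1
    by unfold_locales (use T_pos \<alpha>s alpha0 d1 in auto)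
  obtain Ck where Ck: "0 \<le> Ck" "\<And>x y. 0 < y \<Longrightarrow> y \<le> x \<Longrightarrow> x \<le> T \<Longrightarrow>
      \<bar>vo_kernel_ext \<alpha> x - vo_kernel_ext \<alpha> y\<bar> \<le> Ck * (x - y) * y powr (-1/2)"
    using vo_kernel_ext_increment_le by blast
  obtain Mk where Mk: "\<And>s. s \<in> {0..T} \<Longrightarrow> \<bar>vo_kernel_ext \<alpha> s\<bar> \<le> Mk"
    using bounded_on_Icc[OF vo_kernel_ext_continuous_on] T_pos by (metis less_eq_real_def)
  show ?thesis
    apply (rule exI[of _ "1/4"], intro conjI allI impI exI)
     apply simp
    apply (elim conjE)
    apply (rule kconv_frac_deriv_bound[OF zeta_pos _ _ Mk Ck]; assumption)
    done
qed

end
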